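(* Let $B_t$ be a Brownian motion in $\mathbb{R}^n$ and $g_t$ a martingale in $\mathbb{R}^n$, both adapted to a filtration $\mathcal{F}_t$. Suppose that $dg_t=\tilde\Gamma_t\,dB_t$ for some matrix-valued process $\tilde\Gamma_t$ satisfying $\mathrm{Tr}(\tilde\Gamma_t)\ge0$ almost surely for all $t$. Assume there exists a set $K\subset\mathbb{R}^n$ such that $g_t\in K$ for all $t$. Then for all $t>0$ and $\alpha>1$, $$\mathbb{P}\left(\min_{s\le t}\mathrm{Tr}(\tilde\Gamma_s)>\alpha\frac{\mathbf{GW}(K)}{\sqrt t}\right)<\frac1\alpha.$$
   Context: $\mathbf{GW}(K)=\mathbb{E}\sup_{x\in K}\langle x,\Gamma\rangle$ where $\Gamma\sim N(0,\mathrm{Id}_n)$. *)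

theory Defs
  imports "HOL-Probability.Probability"
begin

text \<open>Filtration (continuous time, indexed by real; only t \<ge> 0 matters) on the probability space M.\<close>
definition is_filtration :: "'a measure \<Rightarrow> (real \<Rightarrow> 'a measure) \<Rightarrow> bool" where
  "is_filtration M F \<longleftrightarrow> (\<forall>s. subalgebra M (F s)) \<and> (\<forall>s t. s \<le> t \<longrightarrow> sets (F s) \<subseteq> sets (F t))"

definition gauss_density :: "real \<Rightarrow> real^'n \<Rightarrow> ennreal" where
  "gauss_density c x = ennreal (\<Prod>i\<in>UNIV. normal_density 0 (sqrt c) (x $ i))"

definition brownian_motion :: "'a measure \<Rightarrow> (real \<Rightarrow> 'a measure) \<Rightarrow> (real \<Rightarrow> 'a \<Rightarrow> real^'n) \<Rightarrow> bool" where
  "brownian_motion M F B \<longleftrightarrow>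
     (\<forall>\<omega>\<in>space M. B 0 \<omega> = 0) \<and>
     (\<forall>\<omega>\<in>space M. continuous_on {0..} (\<lambda>t. B t \<omega>)) \<and>
     (\<forall>t\<ge>0. B t \<in> borel_measurable (F t)) \<and>
     (\<forall>s t. 0 \<le> s \<and> s < t \<longrightarrow>
        distributed M lborel (\<lambda>\<omega>. B t \<omega> - B s \<omega>) (gauss_density (t - s))) \<and>
     (\<forall>s t. 0 \<le> s \<and> s \<le> t \<longrightarrow>
        (\<forall>A\<in>sets (F s). \<forall>C\<in>sets borel.
           measure M (A \<inter> {\<omega>\<in>space M. B t \<omega> - B s \<omega> \<in> C})
             = measure M A * measure M {\<omega>\<in>space M. B t \<omega> - B s \<omega> \<in> C}))"

definition vec_martingale :: "'a measure \<Rightarrow> (real \<Rightarrow> 'a measure) \<Rightarrow> (real \<Rightarrow> 'a \<Rightarrow> real^'n) \<Rightarrow> bool" where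
  "vec_martingale M F g \<longleftrightarrow>
     (\<forall>t\<ge>0. g t \<in> borel_measurable (F t)) \<and>
     (\<forall>t\<ge>0. \<forall>i. integrable M (\<lambda>\<omega>. g t \<omega> $ i)) \<and>
     (\<forall>s t i. 0 \<le> s \<and> s \<le> t \<longrightarrow>
        (AE \<omega> in M. real_cond_exp M (F s) (\<lambda>\<omega>. g t \<omega> $ i) \<omega> = g s \<omega> $ i))"

definition simple_partition :: "(real \<Rightarrow> 'a measure) \<Rightarrow> real \<Rightarrow> nat \<Rightarrow> (nat \<Rightarrow> real) \<Rightarrow> (nat \<Rightarrow> 'a \<Rightarrow> real) \<Rightarrow> bool" where
  "simple_partition F t k p \<xi> \<longleftrightarrow> p 0 = 0 \<and> p k = t \<and> (\<forall>i<k. p i < p (Suc i)) \<and>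
     (\<forall>i<k. \<xi> i \<in> borel_measurable (F (p i)) \<and> (\<exists>C. \<forall>\<omega>. \<bar>\<xi> i \<omega>\<bar> \<le> C))"

definition simple_proc :: "nat \<Rightarrow> (nat \<Rightarrow> real) \<Rightarrow> (nat \<Rightarrow> 'a \<Rightarrow> real) \<Rightarrow> real \<Rightarrow> 'a \<Rightarrow> real" where
  "simple_proc k p \<xi> s \<omega> = (\<Sum>i<k. indicator {p i<..p (Suc i)} s * \<xi> i \<omega>)"

definition simple_int :: "(real \<Rightarrow> 'a \<Rightarrow> real) \<Rightarrow> nat \<Rightarrow> (nat \<Rightarrow> real) \<Rightarrow> (nat \<Rightarrow> 'a \<Rightarrow> real) \<Rightarrow> 'a \<Rightarrow> real" where
  "simple_int W k p \<xi> \<omega> = (\<Sum>i<k. \<xi> i \<omega> * (W (p (Suc i)) \<omega> - W (p i) \<omega>))"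

definition progressive :: "(real \<Rightarrow> 'a measure) \<Rightarrow> (real \<Rightarrow> 'a \<Rightarrow> real) \<Rightarrow> bool" where
  "progressive F H \<longleftrightarrow> (\<forall>u\<ge>0. (\<lambda>(s,\<omega>). H s \<omega>) \<in>
      borel_measurable (restrict_space borel {0..u} \<Otimes>\<^sub>M F u))"

text \<open>I is (a version of) the Ito integral of H against the scalar Brownian motion W over [0,t]:
  the L2 limit of integrals of simple predictable processes converging to H in L2(dP x ds).\<close>
definition ito_integral_is :: "'a measure \<Rightarrow> (real \<Rightarrow> 'a measure) \<Rightarrow> (real \<Rightarrow> 'a \<Rightarrow> real) \<Rightarrow> real
    \<Rightarrow> (real \<Rightarrow> 'a \<Rightarrow> real) \<Rightarrow> ('a \<Rightarrow> real) \<Rightarrow> bool" where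
  "ito_integral_is M F W t H I \<longleftrightarrow> progressive F H \<and> I \<in> borel_measurable M \<and>
     (\<exists>k p \<xi>. (\<forall>m. simple_partition F t (k m) (p m) (\<xi> m)) \<and>
        ((\<lambda>m. \<integral>\<^sup>+\<omega>. (\<integral>\<^sup>+s\<in>{0..t}. ennreal ((H s \<omega> - simple_proc (k m) (p m) (\<xi> m) s \<omega>)\<^sup>2) \<partial>lborel) \<partial>M)
           \<longlonglongrightarrow> 0) \<and>
        ((\<lambda>m. \<integral>\<^sup>+\<omega>. ennreal ((I \<omega> - simple_int W (k m) (p m) (\<xi> m) \<omega>)\<^sup>2) \<partial>M) \<longlonglongrightarrow> 0))"

text \<open>dg_t = Gamma_t dB_t, i.e. g_t - g_0 = int_0^t Gamma_s dB_s a.s., componentwise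
  (g_t)_i - (g_0)_i = sum_j int_0^t Gamma_ij dB^j.\<close>
definition ito_sde :: "'a measure \<Rightarrow> (real \<Rightarrow> 'a measure) \<Rightarrow> (real \<Rightarrow> 'a \<Rightarrow> real^'n)
    \<Rightarrow> (real \<Rightarrow> 'a \<Rightarrow> real^'n^'n) \<Rightarrow> (real \<Rightarrow> 'a \<Rightarrow> real^'n) \<Rightarrow> bool" where
  "ito_sde M F g \<Gamma> B \<longleftrightarrow> (\<forall>t\<ge>0. \<forall>i. \<exists>I :: 'n \<Rightarrow> 'a \<Rightarrow> real.
      (\<forall>j. ito_integral_is M F (\<lambda>s \<omega>. B s \<omega> $ j) t (\<lambda>s \<omega>. \<Gamma> s \<omega> $ i $ j) (I j)) \<and>
      (AE \<omega> in M. g t \<omega> $ i - g 0 \<omega> $ i = (\<Sum>j\<in>UNIV. I j \<omega>)))"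

definition std_gauss :: "(real^'n) measure" where
  "std_gauss = density lborel (gauss_density 1)"

text \<open>Gaussian width GW(K) = E sup_{x in K} <x, Gamma>, as an extended real
  (it is +infinity e.g. for unbounded K); the sup is taken in ereal.\<close>
definition GW :: "(real^'n) set \<Rightarrow> ereal" where
  "GW K = (let f = (\<lambda>\<gamma>. SUP x\<in>K. ereal (x \<bullet> \<gamma>)) in
     enn2ereal (\<integral>\<^sup>+\<gamma>. e2ennreal (f \<gamma>) \<partial>std_gauss) - enn2ereal (\<integral>\<^sup>+\<gamma>. e2ennreal (- f \<gamma>) \<partial>std_gauss))"

end

theory Submission
  imports Defs
begin

text \<open>
  Ito's isometry in covariance form gives \<open>E[g\<^sub>t \<bullet> B\<^sub>t] = E[\<integral>\<^sub>0\<^sup>t tr \<Gamma>\<^sub>s ds]\<close>: for simple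
  integrands this is the independence of Brownian increments, and it survives the \<open>L\<^sup>2\<close> limit
  defining the integral. As \<open>g\<^sub>t \<in> K\<close>, the left side is at most \<open>E sup\<^sub>x\<^sub>\<in>\<^sub>K x \<bullet> B\<^sub>t = \<surd>t GW(K)\<close>,
  since \<open>B\<^sub>t\<close> has the law of \<open>\<surd>t\<close> times a standard Gaussian vector. On the event
  \<open>min\<^sub>s\<^sub>\<le>\<^sub>t tr \<Gamma>\<^sub>s > \<alpha> GW(K) / \<surd>t\<close> the nonnegative variable \<open>\<integral>\<^sub>0\<^sup>t tr \<Gamma>\<^sub>s ds\<close> exceeds
  \<open>\<alpha> \<surd>t GW(K)\<close>, and Markov's inequality bounds its probability by \<open>1/\<alpha>\<close>.
\<close>

section \<open>Brownian increments and Gaussian moments\<close>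

lemma filtration_measurable:
  assumes "is_filtration M F" "f \<in> measurable (F s) N"
  shows "f \<in> measurable M N"
  using assms measurable_from_subalg unfolding is_filtration_def by blast

lemma filtration_mono_measurable:
  assumes "is_filtration M F" "s \<le> u" "f \<in> borel_measurable (F s)"
  shows "f \<in> borel_measurable (F u)"
proof -
  have "space (F s) = space (F u)" "sets (F s) \<subseteq> sets (F u)"
    using assms unfolding is_filtration_def subalgebra_def by auto
  then show ?thesis using assms(3) by (auto simp: measurable_def)
qed

lemma brownian_motion_start:
  "brownian_motion M F B \<Longrightarrow> \<omega> \<in> space M \<Longrightarrow> B 0 \<omega> = 0"
  unfolding brownian_motion_def by simp

lemma brownian_motion_adapted:
  assumes "is_filtration M F" "brownian_motion M F B" "0 \<le> a" "a \<le> b"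
  shows "B a \<in> borel_measurable (F b)"
  using filtration_mono_measurable[OF assms(1,4)] assms(2,3) unfolding brownian_motion_def by auto

lemma brownian_motion_measurable:
  assumes "is_filtration M F" "brownian_motion M F B" "0 \<le> u"
  shows "B u \<in> borel_measurable M"
  using assms filtration_measurable unfolding brownian_motion_def by blast

lemma brownian_increment_indep:
  fixes X :: "'a \<Rightarrow> real" and h :: "real^'n \<Rightarrow> real" and B :: "real \<Rightarrow> 'a \<Rightarrow> real^'n"
  assumes P: "prob_space M" and filt: "is_filtration M F" and bm: "brownian_motion M F B"
    and su: "0 \<le> s" "s \<le> u"
    and X: "X \<in> borel_measurable (F s)" and h: "h \<in> borel_measurable borel"
  shows "prob_space.indep_var M borel X borel (\<lambda>\<omega>. h (B u \<omega> - B s \<omega>))"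
proof -
  interpret prob_space M by fact
  have sub: "subalgebra M (F s)" using filt unfolding is_filtration_def by auto
  define D where "D = (\<lambda>\<omega>. B u \<omega> - B s \<omega>)"
  have [measurable]: "B u \<in> borel_measurable M" "B s \<in> borel_measurable M"
    using brownian_motion_measurable[OF filt bm] su by auto
  then have Dm: "D \<in> borel_measurable M" unfolding D_def by measurable
  define V where "V = vimage_algebra (space M) D borel"
  have sets_V: "sets V = {D -` A \<inter> space M | A. A \<in> sets borel}"
    unfolding V_def by (rule sets_vimage_algebra2) simp
  have Xm: "X \<in> borel_measurable M" using measurable_from_subalg[OF sub X] .
  have hDm: "(\<lambda>\<omega>. h (D \<omega>)) \<in> borel_measurable M" using Dm h by measurable
  have indep_F_V: "indep_set (sets (F s)) (sets V)"
    unfolding indep_sets2_eq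
  proof (intro conjI ballI)
    show "sets (F s) \<subseteq> events" using sub unfolding subalgebra_def by auto
    show "sets V \<subseteq> events" using Dm unfolding sets_V by auto
    fix a b assume a: "a \<in> sets (F s)" and b: "b \<in> sets V"
    then obtain C where C: "C \<in> sets borel" "b = D -` C \<inter> space M" unfolding sets_V by auto
    have "b = {\<omega>\<in>space M. B u \<omega> - B s \<omega> \<in> C}" using C unfolding D_def by auto
    then show "prob (a \<inter> b) = prob a * prob b"
      using bm su a C unfolding brownian_motion_def by auto
  qed
  have X_sets: "sigma_sets (space M) {X -` A \<inter> space M | A. A \<in> sets borel} \<subseteq> sets (F s)"
  proof -
    have "sigma_sets (space (F s)) {X -` A \<inter> space M | A. A \<in> sets borel} \<subseteq> sets (F s)"
      by (rule sets.sigma_sets_subset) (use X sub in \<open>auto simp: measurable_def subalgebra_def\<close>)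
    then show ?thesis using sub unfolding subalgebra_def by simp
  qed
  have hD_sets: "sigma_sets (space M) {(\<lambda>\<omega>. h (D \<omega>)) -` A \<inter> space M | A. A \<in> sets borel} \<subseteq> sets V"
  proof -
    have "sigma_sets (space V) {(\<lambda>\<omega>. h (D \<omega>)) -` A \<inter> space M | A. A \<in> sets borel} \<subseteq> sets V"
    proof (rule sets.sigma_sets_subset, safe)
      fix A :: "real set" assume A: "A \<in> sets borel"
      have "(\<lambda>\<omega>. h (D \<omega>)) -` A \<inter> space M = D -` (h -` A) \<inter> space M" by auto
      moreover have "h -` A \<in> sets borel" using h A by (simp add: measurable_sets_borel)
      ultimately show "(\<lambda>\<omega>. h (D \<omega>)) -` A \<inter> space M \<in> sets V" unfolding sets_V by blast
    qed
    then show ?thesis unfolding V_def by simp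
  qed
  have "indep_set (sigma_sets (space M) {X -` A \<inter> space M | A. A \<in> sets borel})
      (sigma_sets (space M) {(\<lambda>\<omega>. h (D \<omega>)) -` A \<inter> space M | A. A \<in> sets borel})"
    using X_sets hD_sets unfolding indep_set_def
    by (intro indep_sets_mono_sets[OF indep_F_V[unfolded indep_set_def]]) (auto split: bool.split)
  then show ?thesis unfolding indep_var_eq D_def using Xm hDm unfolding D_def by auto
qed

lemma brownian_increment_integral_mult:
  fixes X :: "'a \<Rightarrow> real" and h :: "real^'n \<Rightarrow> real" and B :: "real \<Rightarrow> 'a \<Rightarrow> real^'n"
  assumes P: "prob_space M" and filt: "is_filtration M F" and bm: "brownian_motion M F B"
    and su: "0 \<le> s" "s \<le> u"
    and X: "X \<in> borel_measurable (F s)" "integrable M X" and h: "h \<in> borel_measurable borel"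
    and hi: "integrable M (\<lambda>\<omega>. h (B u \<omega> - B s \<omega>))"
  shows "integrable M (\<lambda>\<omega>. X \<omega> * h (B u \<omega> - B s \<omega>))"
    "(\<integral>\<omega>. X \<omega> * h (B u \<omega> - B s \<omega>) \<partial>M) = (\<integral>\<omega>. X \<omega> \<partial>M) * (\<integral>\<omega>. h (B u \<omega> - B s \<omega>) \<partial>M)"
  using prob_space.indep_var_integrable[OF P brownian_increment_indep[OF assms(1-6) h] X(2) hi]
    prob_space.indep_var_lebesgue_integral[OF P brownian_increment_indep[OF assms(1-6) h] X(2) hi]
  by auto

lemma lborel_integral_prod_Basis:
  fixes F :: "'a::euclidean_space \<Rightarrow> real \<Rightarrow> real"
  assumes int: "\<And>b. b\<in>Basis \<Longrightarrow> integrable lborel (F b)"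
  shows "integrable lborel (\<lambda>x::'a. \<Prod>b\<in>Basis. F b (x\<bullet>b))"
    and "(\<integral>x. (\<Prod>b\<in>Basis. F b (x\<bullet>b)) \<partial>(lborel::'a measure)) = (\<Prod>b\<in>Basis. \<integral>z. F b z \<partial>lborel)"
proof -
  interpret product_sigma_finite "\<lambda>_::'a. lborel::real measure"
    by (simp add: product_sigma_finite_def lborel.sigma_finite_measure_axioms)
  define T where "T = (\<lambda>g. \<Sum>b\<in>(Basis::'a set). g b *\<^sub>R b)"
  have lb: "(lborel::'a measure) = distr (\<Pi>\<^sub>M b\<in>Basis. lborel) borel T"
    unfolding T_def by (rule lborel_eq)
  have Tm: "T \<in> measurable (\<Pi>\<^sub>M b\<in>Basis. lborel) borel" unfolding T_def by measurable
  have Fm[measurable]: "\<And>b. b\<in>Basis \<Longrightarrow> F b \<in> borel_measurable borel"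
    using int borel_measurable_integrable measurable_lborel1 by (metis measurable_cong_sets sets_lborel)
  have fm: "(\<lambda>x::'a. \<Prod>b\<in>Basis. F b (x\<bullet>b)) \<in> borel_measurable borel"
    by measurable
  have coords: "\<And>g. (\<Prod>b\<in>Basis. F b (T g \<bullet> b)) = (\<Prod>b\<in>Basis. F b (g b))"
    unfolding T_def
    by (intro prod.cong refl) (simp add: inner_sum_left inner_Basis if_distrib sum.delta cong: if_cong)
  have "integrable (\<Pi>\<^sub>M b\<in>Basis. lborel) (\<lambda>g. \<Prod>b\<in>Basis. F b (g b))"
    by (rule product_integrable_prod) (auto intro: int)
  then show "integrable lborel (\<lambda>x::'a. \<Prod>b\<in>Basis. F b (x\<bullet>b))"
    unfolding lb integrable_distr_eq[OF Tm fm] coords .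
  have "(\<integral>x. (\<Prod>b\<in>Basis. F b (x\<bullet>b)) \<partial>(lborel::'a measure)) =
     (\<integral>g. (\<Prod>b\<in>Basis. F b (T g \<bullet> b)) \<partial>(\<Pi>\<^sub>M b\<in>Basis. lborel))"
    unfolding lb by (rule integral_distr[OF Tm fm])
  also have "\<dots> = (\<Prod>b\<in>Basis. \<integral>z. F b z \<partial>lborel)"
    unfolding coords by (rule product_integral_prod) (auto intro: int)
  finally show "(\<integral>x. (\<Prod>b\<in>Basis. F b (x\<bullet>b)) \<partial>(lborel::'a measure)) = (\<Prod>b\<in>Basis. \<integral>z. F b z \<partial>lborel)" .
qed

lemma prod_vec_eq_prod_Basis:
  fixes f :: "'n::finite \<Rightarrow> real \<Rightarrow> real" and x :: "real^'n"
  shows "(\<Prod>i\<in>UNIV. f i (x$i)) = (\<Prod>b\<in>Basis. f (SOME i. b = axis i 1) (x \<bullet> b))"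
proof -
  have inj: "inj (\<lambda>i::'n. axis i (1::real))" by (auto simp: inj_def axis_eq_axis)
  have Basis_range: "(Basis :: (real^'n) set) = range (\<lambda>i. axis i 1)" by (auto simp: Basis_vec_def)
  have "(\<Prod>b\<in>Basis. f (SOME i. b = axis i 1) (x \<bullet> b)) =
      (\<Prod>i\<in>UNIV. f (SOME j. axis i (1::real) = axis j 1) (x \<bullet> axis i 1))"
    unfolding Basis_range by (subst prod.reindex[OF inj]) simp
  also have "\<dots> = (\<Prod>i\<in>UNIV. f i (x$i))"
    by (intro prod.cong refl) (simp add: axis_eq_axis inner_axis)
  finally show ?thesis by simp
qed

lemma lborel_integral_prod_vec:
  fixes f :: "'n::finite \<Rightarrow> real \<Rightarrow> real"
  assumes int: "\<And>i. integrable lborel (f i)"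
  shows "integrable lborel (\<lambda>x::real^'n. \<Prod>i\<in>UNIV. f i (x$i))"
    and "(\<integral>x. (\<Prod>i\<in>UNIV. f i (x$i)) \<partial>(lborel::(real^'n) measure)) = (\<Prod>i\<in>UNIV. \<integral>z. f i z \<partial>lborel)"
proof -
  define F where "F = (\<lambda>b::real^'n. f (SOME i. b = axis i 1))"
  have intF: "\<And>b. b\<in>Basis \<Longrightarrow> integrable lborel (F b)" unfolding F_def using int by simp
  show "integrable lborel (\<lambda>x::real^'n. \<Prod>i\<in>UNIV. f i (x$i))"
    unfolding prod_vec_eq_prod_Basis using lborel_integral_prod_Basis(1)[OF intF] unfolding F_def .
  have "(\<integral>x. (\<Prod>i\<in>UNIV. f i (x$i)) \<partial>(lborel::(real^'n) measure)) = (\<Prod>b\<in>Basis. \<integral>z. F b z \<partial>lborel)"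
    unfolding prod_vec_eq_prod_Basis using lborel_integral_prod_Basis(2)[OF intF] unfolding F_def .
  also have "\<dots> = (\<Prod>i\<in>UNIV. \<integral>z. f i z \<partial>lborel)"
    using prod_vec_eq_prod_Basis[of "\<lambda>i _. \<integral>z. f i z \<partial>lborel" 0] unfolding F_def by simp
  finally show "(\<integral>x. (\<Prod>i\<in>UNIV. f i (x$i)) \<partial>(lborel::(real^'n) measure)) = (\<Prod>i\<in>UNIV. \<integral>z. f i z \<partial>lborel)" .
qed

definition gauss_pdf :: "real \<Rightarrow> real^'n \<Rightarrow> real" where
  "gauss_pdf c x = (\<Prod>i\<in>UNIV. normal_density 0 (sqrt c) (x $ i))"

lemma gauss_density_eq_gauss_pdf: "gauss_density c = (\<lambda>x. ennreal (gauss_pdf c x))"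
  by (simp add: gauss_density_def gauss_pdf_def fun_eq_iff)

lemma gauss_pdf_nonneg: "0 \<le> gauss_pdf c x"
  by (simp add: gauss_pdf_def prod_nonneg)

lemma borel_measurable_gauss_pdf[measurable]: "gauss_pdf c \<in> borel_measurable borel"
  unfolding gauss_pdf_def by measurable

lemma gaussian_vector_monomial_moment:
  fixes X :: "'a \<Rightarrow> real^'n" and e :: "'n \<Rightarrow> nat"
  assumes X: "distributed M lborel X (gauss_density c)" and c: "c > 0"
  shows "integrable M (\<lambda>\<omega>. \<Prod>k\<in>UNIV. X \<omega> $ k ^ e k)"
    "(\<integral>\<omega>. (\<Prod>k\<in>UNIV. X \<omega> $ k ^ e k) \<partial>M) =
      (\<Prod>k\<in>UNIV. \<integral>z. normal_density 0 (sqrt c) z * z ^ e k \<partial>lborel)"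
proof -
  have X': "distributed M lborel X (\<lambda>x. ennreal (gauss_pdf c x))"
    using X by (simp add: gauss_density_eq_gauss_pdf)
  have factor_int: "\<And>k. integrable lborel (\<lambda>z. normal_density 0 (sqrt c) z * z ^ e k)"
    using integrable_normal_moment[of "sqrt c" 0] c by simp
  have factors: "gauss_pdf c x * (\<Prod>k\<in>UNIV. x $ k ^ e k) =
      (\<Prod>k\<in>UNIV. normal_density 0 (sqrt c) (x $ k) * x $ k ^ e k)" for x :: "real^'n"
    by (simp add: gauss_pdf_def prod.distrib)
  show "integrable M (\<lambda>\<omega>. \<Prod>k\<in>UNIV. X \<omega> $ k ^ e k)"
    using distributed_integrable[OF X', of "\<lambda>x. \<Prod>k\<in>UNIV. x $ k ^ e k"]
      lborel_integral_prod_vec(1)[of "\<lambda>k z. normal_density 0 (sqrt c) z * z ^ e k", OF factor_int]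
    by (simp add: gauss_pdf_nonneg factors)
  show "(\<integral>\<omega>. (\<Prod>k\<in>UNIV. X \<omega> $ k ^ e k) \<partial>M) =
      (\<Prod>k\<in>UNIV. \<integral>z. normal_density 0 (sqrt c) z * z ^ e k \<partial>lborel)"
    using distributed_integral[OF X', of "\<lambda>x. \<Prod>k\<in>UNIV. x $ k ^ e k"]
      lborel_integral_prod_vec(2)[of "\<lambda>k z. normal_density 0 (sqrt c) z * z ^ e k", OF factor_int]
    by (simp add: gauss_pdf_nonneg factors)
qed

lemma gaussian_vector_moments:
  fixes X :: "'a \<Rightarrow> real^'n"
  assumes X: "distributed M lborel X (gauss_density c)" and c: "c > 0"
  shows "integrable M (\<lambda>\<omega>. X \<omega> $ i)" "(\<integral>\<omega>. X \<omega> $ i \<partial>M) = 0"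
    "integrable M (\<lambda>\<omega>. X \<omega> $ i * X \<omega> $ j)"
    "(\<integral>\<omega>. X \<omega> $ i * X \<omega> $ j \<partial>M) = (if i = j then c else 0)"
proof -
  have s: "0 < sqrt c" using c by simp
  define moment where "moment = (\<lambda>e. \<integral>z. normal_density 0 (sqrt c) z * z ^ e \<partial>lborel)"
  have moment_0: "moment 0 = 1" and moment_1: "moment 1 = 0" and moment_2: "moment 2 = c"
    unfolding moment_def
    using integral_normal_density[OF s, of 0] integral_normal_moment_nz_1[OF s, of 0]
      integral_normal_moment_even[OF s, of 0 1] c
    by (simp_all add: power2_eq_square)
  have single: "(\<Prod>k\<in>UNIV. x $ k ^ (if k = l then 1 else 0)) = x $ l" for x :: "real^'n" and l
    by (simp add: if_distrib prod.If_cases)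
  define e1 where "e1 = (\<lambda>k. if k = i then 1 else 0 :: nat)"
  have "X \<omega> $ i = (\<Prod>k\<in>UNIV. X \<omega> $ k ^ e1 k)" for \<omega>
    by (simp add: e1_def single)
  moreover have "(\<Prod>k\<in>UNIV. moment (e1 k)) = 0"
    by (rule prod_zero) (use moment_1 in \<open>auto simp: e1_def\<close>)
  ultimately show "integrable M (\<lambda>\<omega>. X \<omega> $ i)" "(\<integral>\<omega>. X \<omega> $ i \<partial>M) = 0"
    using gaussian_vector_monomial_moment[OF X c, of e1] by (simp_all add: moment_def)
  define e2 where "e2 = (\<lambda>k. (if k = i then 1 else 0) + (if k = j then 1 else 0) :: nat)"
  have "X \<omega> $ i * X \<omega> $ j = (\<Prod>k\<in>UNIV. X \<omega> $ k ^ e2 k)" for \<omega>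
    unfolding e2_def power_add prod.distrib single ..
  moreover have "(\<Prod>k\<in>UNIV. moment (e2 k)) = (if i = j then c else 0)"
  proof (cases "i = j")
    case True
    then have "(\<Prod>k\<in>UNIV. moment (e2 k)) = (\<Prod>k\<in>UNIV. if k = i then c else 1)"
      using moment_0 moment_2 by (intro prod.cong) (auto simp: e2_def numeral_2_eq_2)
    then show ?thesis using True by simp
  next
    case False
    then have "moment (e2 i) = 0" using moment_1 by (simp add: e2_def)
    then show ?thesis using False by (auto intro: prod_zero[of UNIV])
  qed
  ultimately show "integrable M (\<lambda>\<omega>. X \<omega> $ i * X \<omega> $ j)"
    "(\<integral>\<omega>. X \<omega> $ i * X \<omega> $ j \<partial>M) = (if i = j then c else 0)"
    using gaussian_vector_monomial_moment[OF X c, of e2] by (simp_all add: moment_def)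
qed

lemma borel_measurable_vec_nth[measurable (raw)]:
  "f \<in> borel_measurable M \<Longrightarrow> (\<lambda>x. f x $ i :: real) \<in> borel_measurable M"
  using measurable_compose[OF _ borel_measurable_nth] by blast

lemma brownian_increment_moments:
  fixes B :: "real \<Rightarrow> 'a \<Rightarrow> real^'n"
  assumes bm: "brownian_motion M F B" and su: "0 \<le> s" "s \<le> u"
  shows "integrable M (\<lambda>\<omega>. (B u \<omega> - B s \<omega>) $ i)" "(\<integral>\<omega>. (B u \<omega> - B s \<omega>) $ i \<partial>M) = 0"
    "integrable M (\<lambda>\<omega>. (B u \<omega> - B s \<omega>) $ i * (B u \<omega> - B s \<omega>) $ j)"
    "(\<integral>\<omega>. (B u \<omega> - B s \<omega>) $ i * (B u \<omega> - B s \<omega>) $ j \<partial>M) = (if i = j then u - s else 0)"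
proof -
  have "(integrable M (\<lambda>\<omega>. (B u \<omega> - B s \<omega>) $ i) \<and> (\<integral>\<omega>. (B u \<omega> - B s \<omega>) $ i \<partial>M) = 0) \<and>
    (integrable M (\<lambda>\<omega>. (B u \<omega> - B s \<omega>) $ i * (B u \<omega> - B s \<omega>) $ j) \<and>
    (\<integral>\<omega>. (B u \<omega> - B s \<omega>) $ i * (B u \<omega> - B s \<omega>) $ j \<partial>M) = (if i = j then u - s else 0))"
  proof (cases "s = u")
    case False
    then have D: "distributed M lborel (\<lambda>\<omega>. B u \<omega> - B s \<omega>) (gauss_density (u - s))"
      using bm su unfolding brownian_motion_def by auto
    have "u - s > 0" using False su by simp
    then show ?thesis using gaussian_vector_moments[OF D] by simp
  qed simp
  then show "integrable M (\<lambda>\<omega>. (B u \<omega> - B s \<omega>) $ i)" "(\<integral>\<omega>. (B u \<omega> - B s \<omega>) $ i \<partial>M) = 0"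
    "integrable M (\<lambda>\<omega>. (B u \<omega> - B s \<omega>) $ i * (B u \<omega> - B s \<omega>) $ j)"
    "(\<integral>\<omega>. (B u \<omega> - B s \<omega>) $ i * (B u \<omega> - B s \<omega>) $ j \<partial>M) = (if i = j then u - s else 0)"
    by auto
qed

lemma integrable_bounded_mult:
  fixes f g :: "'a \<Rightarrow> real"
  assumes "f \<in> borel_measurable M" "\<And>\<omega>. \<bar>f \<omega>\<bar> \<le> C" "integrable M g"
  shows "integrable M (\<lambda>\<omega>. f \<omega> * g \<omega>)"
proof (rule Bochner_Integration.integrable_bound)
  show "integrable M (\<lambda>\<omega>. C * g \<omega>)" using assms(3) by simp
  show "(\<lambda>\<omega>. f \<omega> * g \<omega>) \<in> borel_measurable M"
    using assms(1) borel_measurable_integrable[OF assms(3)] by measurable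
  have "0 \<le> C" using assms(2) abs_ge_zero order_trans by blast
  then show "AE \<omega> in M. norm (f \<omega> * g \<omega>) \<le> norm (C * g \<omega>)"
    using assms(2) by (auto simp: abs_mult intro!: mult_right_mono)
qed

text \<open>Split \<open>B t\<close> into the increments over \<open>[0,a]\<close>, \<open>[a,b]\<close> and \<open>[b,t]\<close>: by independence
  of increments from the past only the middle one correlates with the step \<open>\<xi> (B b - B a)\<close>.\<close>
lemma brownian_step_covariance:
  fixes B :: "real \<Rightarrow> 'a \<Rightarrow> real^'n" and \<xi> :: "'a \<Rightarrow> real"
  assumes P: "prob_space M" and filt: "is_filtration M F" and bm: "brownian_motion M F B"
    and ab: "0 \<le> a" "a \<le> b" "b \<le> t"
    and \<xi>: "\<xi> \<in> borel_measurable (F a)" "\<And>\<omega>. \<bar>\<xi> \<omega>\<bar> \<le> C"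
  shows "integrable M (\<lambda>\<omega>. \<xi> \<omega> * (B b \<omega> $ j - B a \<omega> $ j) * B t \<omega> $ i)"
    "(\<integral>\<omega>. \<xi> \<omega> * (B b \<omega> $ j - B a \<omega> $ j) * B t \<omega> $ i \<partial>M) =
      (if i = j then (b - a) * (\<integral>\<omega>. \<xi> \<omega> \<partial>M) else 0)"
proof -
  interpret prob_space M by fact
  have \<xi>M: "\<xi> \<in> borel_measurable M" using filtration_measurable[OF filt \<xi>(1)] .
  have \<xi>_int: "integrable M \<xi>" by (rule integrable_const_bound[of _ C]) (use \<xi> \<xi>M in auto)
  note adapted = brownian_motion_adapted[OF filt bm]
  define X1 where "X1 = (\<lambda>\<omega>. \<xi> \<omega> * (B a \<omega> - B 0 \<omega>) $ i)"
  define X3 where "X3 = (\<lambda>\<omega>. \<xi> \<omega> * (B b \<omega> - B a \<omega>) $ j)"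
  have X1m: "X1 \<in> borel_measurable (F a)"
  proof -
    have [measurable]: "B 0 \<in> borel_measurable (F a)" "B a \<in> borel_measurable (F a)"
      using adapted ab by auto
    show ?thesis unfolding X1_def using \<xi>(1) by measurable
  qed
  have X3m: "X3 \<in> borel_measurable (F b)"
  proof -
    have [measurable]: "B a \<in> borel_measurable (F b)" "B b \<in> borel_measurable (F b)"
      using adapted ab by auto
    show ?thesis unfolding X3_def using filtration_mono_measurable[OF filt ab(2) \<xi>(1)] by measurable
  qed
  have X1i: "integrable M X1" unfolding X1_def
    by (rule integrable_bounded_mult[OF \<xi>M \<xi>(2)]) (rule brownian_increment_moments(1)[OF bm], use ab in auto)
  have X3i: "integrable M X3" unfolding X3_def
    by (rule integrable_bounded_mult[OF \<xi>M \<xi>(2)]) (rule brownian_increment_moments(1)[OF bm], use ab in auto)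
  note indep = brownian_increment_integral_mult[OF P filt bm]
  have I1: "integrable M (\<lambda>\<omega>. X1 \<omega> * (B b \<omega> - B a \<omega>) $ j)"
    "(\<integral>\<omega>. X1 \<omega> * (B b \<omega> - B a \<omega>) $ j \<partial>M) = 0"
    using indep[of a b X1 "\<lambda>v. v $ j"] X1m X1i ab brownian_increment_moments[OF bm, of a b] by simp_all
  have I2: "integrable M (\<lambda>\<omega>. \<xi> \<omega> * ((B b \<omega> - B a \<omega>) $ j * (B b \<omega> - B a \<omega>) $ i))"
    "(\<integral>\<omega>. \<xi> \<omega> * ((B b \<omega> - B a \<omega>) $ j * (B b \<omega> - B a \<omega>) $ i) \<partial>M) =
      (if i = j then (b - a) * (\<integral>\<omega>. \<xi> \<omega> \<partial>M) else 0)"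
    using indep[of a b \<xi> "\<lambda>v. v $ j * v $ i"] \<xi>(1) \<xi>_int ab brownian_increment_moments[OF bm, of a b]
    by (simp_all add: eq_commute[of j i])
  have I3: "integrable M (\<lambda>\<omega>. X3 \<omega> * (B t \<omega> - B b \<omega>) $ i)"
    "(\<integral>\<omega>. X3 \<omega> * (B t \<omega> - B b \<omega>) $ i \<partial>M) = 0"
    using indep[of b t X3 "\<lambda>v. v $ i"] X3m X3i ab brownian_increment_moments[OF bm, of b t] by simp_all
  have split: "\<xi> \<omega> * (B b \<omega> $ j - B a \<omega> $ j) * B t \<omega> $ i =
     X1 \<omega> * (B b \<omega> - B a \<omega>) $ j + \<xi> \<omega> * ((B b \<omega> - B a \<omega>) $ j * (B b \<omega> - B a \<omega>) $ i)
     + X3 \<omega> * (B t \<omega> - B b \<omega>) $ i" if "\<omega> \<in> space M" for \<omega>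
    using brownian_motion_start[OF bm that] unfolding X1_def X3_def by (simp add: algebra_simps)
  show "integrable M (\<lambda>\<omega>. \<xi> \<omega> * (B b \<omega> $ j - B a \<omega> $ j) * B t \<omega> $ i)"
    using I1(1) I2(1) I3(1) by (subst Bochner_Integration.integrable_cong[OF refl split]) auto
  show "(\<integral>\<omega>. \<xi> \<omega> * (B b \<omega> $ j - B a \<omega> $ j) * B t \<omega> $ i \<partial>M) =
      (if i = j then (b - a) * (\<integral>\<omega>. \<xi> \<omega> \<partial>M) else 0)"
    using I1 I2 I3 by (subst Bochner_Integration.integral_cong[OF refl split]) auto
qed

lemma simple_partition_bounds:
  assumes sp: "simple_partition F t k p \<xi>" and l: "l \<le> k"
  shows "0 \<le> p l" "p l \<le> t"
proof -
  have mono: "p i \<le> p j" if "i \<le> j" "j \<le> k" for i j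
    using that
  proof (induction j)
    case (Suc j)
    have "p j < p (Suc j)" using Suc.prems sp unfolding simple_partition_def by auto
    then show ?case using Suc by (cases "i = Suc j") auto
  qed simp
  have "p 0 = 0" "p k = t" using sp unfolding simple_partition_def by auto
  then show "0 \<le> p l" "p l \<le> t" using mono[of 0 l] mono[of l k] l by auto
qed

lemma simple_int_covariance:
  fixes B :: "real \<Rightarrow> 'a \<Rightarrow> real^'n"
  assumes P: "prob_space M" and filt: "is_filtration M F" and bm: "brownian_motion M F B"
    and sp: "simple_partition F t k p \<xi>"
  shows "integrable M (\<lambda>\<omega>. simple_int (\<lambda>s \<omega>. B s \<omega> $ j) k p \<xi> \<omega> * B t \<omega> $ i)"
    "(\<integral>\<omega>. simple_int (\<lambda>s \<omega>. B s \<omega> $ j) k p \<xi> \<omega> * B t \<omega> $ i \<partial>M) =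
      (if i = j then (\<Sum>l<k. (p (Suc l) - p l) * (\<integral>\<omega>. \<xi> l \<omega> \<partial>M)) else 0)"
proof -
  have steps: "integrable M (\<lambda>\<omega>. \<xi> l \<omega> * (B (p (Suc l)) \<omega> $ j - B (p l) \<omega> $ j) * B t \<omega> $ i) \<and>
    (\<integral>\<omega>. \<xi> l \<omega> * (B (p (Suc l)) \<omega> $ j - B (p l) \<omega> $ j) * B t \<omega> $ i \<partial>M) =
      (if i = j then (p (Suc l) - p l) * (\<integral>\<omega>. \<xi> l \<omega> \<partial>M) else 0)" if l: "l < k" for l
  proof -
    have ab: "0 \<le> p l" "p l \<le> p (Suc l)" "p (Suc l) \<le> t"
      using simple_partition_bounds[OF sp, of l] simple_partition_bounds[OF sp, of "Suc l"] l sp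
      unfolding simple_partition_def by auto
    obtain C where "\<And>\<omega>. \<bar>\<xi> l \<omega>\<bar> \<le> C" "\<xi> l \<in> borel_measurable (F (p l))"
      using sp l unfolding simple_partition_def by blast
    then show ?thesis using brownian_step_covariance[OF P filt bm ab, of "\<xi> l" C j i] by simp
  qed
  have sum_steps: "simple_int (\<lambda>s \<omega>. B s \<omega> $ j) k p \<xi> \<omega> * B t \<omega> $ i =
     (\<Sum>l<k. \<xi> l \<omega> * (B (p (Suc l)) \<omega> $ j - B (p l) \<omega> $ j) * B t \<omega> $ i)" for \<omega>
    unfolding simple_int_def by (simp add: sum_distrib_right)
  show "integrable M (\<lambda>\<omega>. simple_int (\<lambda>s \<omega>. B s \<omega> $ j) k p \<xi> \<omega> * B t \<omega> $ i)"
    unfolding sum_steps using steps by (intro Bochner_Integration.integrable_sum) auto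
  show "(\<integral>\<omega>. simple_int (\<lambda>s \<omega>. B s \<omega> $ j) k p \<xi> \<omega> * B t \<omega> $ i \<partial>M) =
      (if i = j then (\<Sum>l<k. (p (Suc l) - p l) * (\<integral>\<omega>. \<xi> l \<omega> \<partial>M)) else 0)"
    unfolding sum_steps using steps by (subst Bochner_Integration.integral_sum) auto
qed

section \<open>Covariance of Ito integrals with the Brownian motion\<close>

lemma abs_mult_le_weighted_squares:
  fixes a b \<delta> :: real
  assumes "\<delta> > 0"
  shows "\<bar>a * b\<bar> \<le> a\<^sup>2 / \<delta> + \<delta> * b\<^sup>2"
proof -
  have "0 \<le> (\<bar>a\<bar> - \<delta> * \<bar>b\<bar>)\<^sup>2" by simp
  then have "2 * \<delta> * \<bar>a * b\<bar> \<le> a\<^sup>2 + \<delta>\<^sup>2 * b\<^sup>2"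
    by (simp add: power2_eq_square algebra_simps abs_mult)
  moreover have "\<delta> * \<bar>a * b\<bar> \<le> 2 * \<delta> * \<bar>a * b\<bar>" using assms by simp
  ultimately have "\<delta> * \<bar>a * b\<bar> \<le> a\<^sup>2 + \<delta>\<^sup>2 * b\<^sup>2" by linarith
  then show ?thesis using assms by (simp add: field_simps power2_eq_square)
qed

lemma tendsto_of_weighted_bound:
  fixes x d :: "nat \<Rightarrow> real"
  assumes bound: "eventually (\<lambda>m. \<forall>\<delta>>0. \<bar>x m - x0\<bar> \<le> d m / \<delta> + \<delta> * C) sequentially"
    and d: "d \<longlonglongrightarrow> 0" and C: "0 \<le> C"
  shows "x \<longlonglongrightarrow> x0"
proof (rule tendstoI)
  fix r :: real assume r: "r > 0"
  define \<delta> where "\<delta> = r / (2 * (C + 1))"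
  have \<delta>: "\<delta> > 0" unfolding \<delta>_def using r C by simp
  have \<delta>C: "\<delta> * C < r / 2" unfolding \<delta>_def using r C by (simp add: field_simps)
  have "eventually (\<lambda>m. dist (d m) 0 < \<delta> * r / 2) sequentially"
    using tendstoD[OF d, of "\<delta> * r / 2"] \<delta> r by simp
  with bound show "eventually (\<lambda>m. dist (x m) x0 < r) sequentially"
  proof eventually_elim
    case (elim m)
    have "\<bar>x m - x0\<bar> \<le> d m / \<delta> + \<delta> * C" using elim(1) \<delta> by auto
    moreover have "d m / \<delta> < r / 2"
      using elim(2) \<delta> by (simp add: dist_real_def divide_less_eq mult.commute)
    ultimately have "\<bar>x m - x0\<bar> < r" using \<delta>C by linarith
    then show ?case by (simp add: dist_real_def)
  qed
qed

text \<open>The weighted AM-GM inequality takes the place of Cauchy-Schwarz.\<close>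
lemma L2_limit_integral_mult:
  fixes f z :: "'a \<Rightarrow> real" and fm :: "nat \<Rightarrow> 'a \<Rightarrow> real"
  assumes conv: "(\<lambda>m. \<integral>\<^sup>+x. ennreal ((f x - fm m x)\<^sup>2) \<partial>N) \<longlonglongrightarrow> 0"
    and [measurable]: "f \<in> borel_measurable N" "\<And>m. fm m \<in> borel_measurable N" "z \<in> borel_measurable N"
    and fm_int: "\<And>m. integrable N (\<lambda>x. fm m x * z x)"
    and z_sq: "integrable N (\<lambda>x. (z x)\<^sup>2)"
  shows "integrable N (\<lambda>x. f x * z x)" "(\<lambda>m. \<integral>x. fm m x * z x \<partial>N) \<longlonglongrightarrow> (\<integral>x. f x * z x \<partial>N)"
proof -
  define D where "D = (\<lambda>m. \<integral>\<^sup>+x. ennreal ((f x - fm m x)\<^sup>2) \<partial>N)"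
  have eventually_D: "eventually (\<lambda>m. D m < 1) sequentially"
    using order_tendstoD(2)[OF conv[folded D_def], of 1] by simp
  have sq_int: "integrable N (\<lambda>x. (f x - fm m x)\<^sup>2)" if "D m < 1" for m
    by (rule integrableI_nonneg) (use that in \<open>auto simp: D_def intro: order.strict_trans\<close>)
  have D_eq: "D m = ennreal (\<integral>x. (f x - fm m x)\<^sup>2 \<partial>N)" if "D m < 1" for m
    unfolding D_def by (rule nn_integral_eq_integral[OF sq_int[OF that, unfolded D_def]]) auto
  have bound: "integrable N (\<lambda>x. (f x - fm m x) * z x) \<and>
      \<bar>\<integral>x. (f x - fm m x) * z x \<partial>N\<bar> \<le> (\<integral>x. (f x - fm m x)\<^sup>2 \<partial>N) / \<delta> + \<delta> * (\<integral>x. (z x)\<^sup>2 \<partial>N)"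
    if Dm: "D m < 1" and \<delta>: "\<delta> > 0" for m \<delta>
  proof -
    have gi: "integrable N (\<lambda>x. (f x - fm m x)\<^sup>2 / \<delta> + \<delta> * (z x)\<^sup>2)"
      using sq_int[OF Dm] z_sq by auto
    have pi: "integrable N (\<lambda>x. (f x - fm m x) * z x)"
      by (rule Bochner_Integration.integrable_bound[OF gi])
        (auto intro!: AE_I2 order_trans[OF abs_mult_le_weighted_squares[OF \<delta>]])
    have "\<bar>\<integral>x. (f x - fm m x) * z x \<partial>N\<bar> \<le> (\<integral>x. \<bar>(f x - fm m x) * z x\<bar> \<partial>N)"
      using Bochner_Integration.integral_norm_bound[of N "\<lambda>x. (f x - fm m x) * z x"] by simp
    also have "\<dots> \<le> (\<integral>x. (f x - fm m x)\<^sup>2 / \<delta> + \<delta> * (z x)\<^sup>2 \<partial>N)"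
      by (rule integral_mono[OF _ gi]) (use pi abs_mult_le_weighted_squares[OF \<delta>] in auto)
    also have "\<dots> = (\<integral>x. (f x - fm m x)\<^sup>2 \<partial>N) / \<delta> + \<delta> * (\<integral>x. (z x)\<^sup>2 \<partial>N)"
      using sq_int[OF Dm] z_sq by simp
    finally show ?thesis using pi by simp
  qed
  obtain m0 where m0: "D m0 < 1" using eventually_D eventually_sequentially by auto
  have decompose: "f x * z x = (f x - fm m x) * z x + fm m x * z x" for m x
    by (simp add: algebra_simps)
  show "integrable N (\<lambda>x. f x * z x)"
    by (subst decompose[of _ m0])
      (intro Bochner_Integration.integrable_add fm_int bound[OF m0, of 1, THEN conjunct1]; simp)
  show "(\<lambda>m. \<integral>x. fm m x * z x \<partial>N) \<longlonglongrightarrow> (\<integral>x. f x * z x \<partial>N)"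
  proof (rule tendsto_of_weighted_bound[where d="\<lambda>m. enn2real (D m)" and C="\<integral>x. (z x)\<^sup>2 \<partial>N"])
    show "(\<lambda>m. enn2real (D m)) \<longlonglongrightarrow> 0"
      using tendsto_enn2real[of D 0] conv[folded D_def] by simp
    show "eventually (\<lambda>m. \<forall>\<delta>>0. \<bar>(\<integral>x. fm m x * z x \<partial>N) - (\<integral>x. f x * z x \<partial>N)\<bar>
        \<le> enn2real (D m) / \<delta> + \<delta> * (\<integral>x. (z x)\<^sup>2 \<partial>N)) sequentially"
      using eventually_D
    proof eventually_elim
      case (elim m)
      show ?case
      proof (intro allI impI)
        fix \<delta> :: real assume "\<delta> > 0"
        note b = bound[OF elim this]
        have "(\<integral>x. f x * z x \<partial>N) = (\<integral>x. (f x - fm m x) * z x \<partial>N) + (\<integral>x. fm m x * z x \<partial>N)"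
          by (subst decompose[of _ m]) (rule Bochner_Integration.integral_add[OF b[THEN conjunct1] fm_int])
        then show "\<bar>(\<integral>x. fm m x * z x \<partial>N) - (\<integral>x. f x * z x \<partial>N)\<bar>
            \<le> enn2real (D m) / \<delta> + \<delta> * (\<integral>x. (z x)\<^sup>2 \<partial>N)"
          using b D_eq[OF elim] by simp
      qed
    qed
  qed simp
qed

lemma progressive_pair_measurable:
  fixes H :: "real \<Rightarrow> 'a \<Rightarrow> real"
  assumes filt: "is_filtration M F" and prog: "progressive F H" and t: "0 \<le> t"
  shows "(\<lambda>(\<omega>, s). indicator {0..t} s * H s \<omega>) \<in> borel_measurable (M \<Otimes>\<^sub>M lborel)"
proof -
  define \<Omega> where "\<Omega> = space M \<times> {0..t::real}"
  have Hm: "(\<lambda>(s,\<omega>). H s \<omega>) \<in> borel_measurable (restrict_space borel {0..t} \<Otimes>\<^sub>M F t)"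
    using prog t unfolding progressive_def by auto
  have sub: "subalgebra M (F t)" using filt unfolding is_filtration_def by auto
  have "snd \<in> measurable (restrict_space (M \<Otimes>\<^sub>M lborel) \<Omega>) (restrict_space borel {0..t})"
  proof (rule measurable_restrict_space2)
    show "snd \<in> space (restrict_space (M \<Otimes>\<^sub>M lborel) \<Omega>) \<rightarrow> {0..t}"
      by (auto simp: \<Omega>_def space_restrict_space space_pair_measure)
    have "snd \<in> measurable (M \<Otimes>\<^sub>M lborel) (borel::real measure)"
      using measurable_snd[of M "lborel :: real measure"] by (simp add: measurable_def)
    then show "snd \<in> measurable (restrict_space (M \<Otimes>\<^sub>M lborel) \<Omega>) borel"
      by (rule measurable_restrict_space1)
  qed
  moreover have "fst \<in> measurable (restrict_space (M \<Otimes>\<^sub>M lborel) \<Omega>) (F t)"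
  proof -
    have "fst \<in> measurable (restrict_space (M \<Otimes>\<^sub>M lborel) \<Omega>) M"
      by (rule measurable_restrict_space1) simp
    moreover have "(\<lambda>x. x) \<in> measurable M (F t)"
      using sub unfolding subalgebra_def by (auto simp: measurable_def)
    ultimately show ?thesis using measurable_compose by blast
  qed
  ultimately have "(\<lambda>(\<omega>,s). (s,\<omega>)) \<in> measurable (restrict_space (M \<Otimes>\<^sub>M lborel) \<Omega>) (restrict_space borel {0..t} \<Otimes>\<^sub>M F t)"
    by (intro measurable_pair) (simp_all add: comp_def case_prod_beta)
  from measurable_compose[OF this Hm]
  have "(\<lambda>(\<omega>,s). H s \<omega>) \<in> borel_measurable (restrict_space (M \<Otimes>\<^sub>M lborel) \<Omega>)"
    by (simp add: case_prod_beta)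
  moreover have "\<Omega> \<inter> space (M \<Otimes>\<^sub>M lborel) \<in> sets (M \<Otimes>\<^sub>M lborel)"
    unfolding \<Omega>_def by (auto simp: space_pair_measure)
  ultimately have "(\<lambda>x. if x \<in> \<Omega> then (\<lambda>(\<omega>,s). H s \<omega>) x else 0) \<in> borel_measurable (M \<Otimes>\<^sub>M lborel)"
    using measurable_restrict_space_iff[of \<Omega> "M \<Otimes>\<^sub>M lborel" 0 borel "\<lambda>(\<omega>,s). H s \<omega>"] by simp
  then show ?thesis
    by (rule measurable_cong[THEN iffD1, rotated]) (auto simp: \<Omega>_def space_pair_measure indicator_def)
qed

lemma integrable_pair_mult:
  fixes f :: "'a \<Rightarrow> real" and g :: "'b \<Rightarrow> real"
  assumes "sigma_finite_measure M" "sigma_finite_measure N"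
    and f: "integrable M f" and g: "integrable N g"
  shows "integrable (M \<Otimes>\<^sub>M N) (\<lambda>(x, y). f x * g y)"
    "integral\<^sup>L (M \<Otimes>\<^sub>M N) (\<lambda>(x, y). f x * g y) = (\<integral>x. f x \<partial>M) * (\<integral>y. g y \<partial>N)"
proof -
  interpret pair_sigma_finite M N by (simp add: pair_sigma_finite_def assms)
  have [measurable]: "f \<in> borel_measurable M" "g \<in> borel_measurable N" using f g by auto
  show int: "integrable (M \<Otimes>\<^sub>M N) (\<lambda>(x, y). f x * g y)"
  proof (rule Fubini_integrable)
    show "integrable M (\<lambda>x. \<integral>y. norm (case (x, y) of (x, y) \<Rightarrow> f x * g y) \<partial>N)"
      using f by (simp add: abs_mult)
  qed (use g in auto)
  have "integral\<^sup>L (M \<Otimes>\<^sub>M N) (\<lambda>(x, y). f x * g y) = (\<integral>x. (\<integral>y. f x * g y \<partial>N) \<partial>M)"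
    using integral_fst'[OF int] by simp
  then show "integral\<^sup>L (M \<Otimes>\<^sub>M N) (\<lambda>(x, y). f x * g y) = (\<integral>x. f x \<partial>M) * (\<integral>y. g y \<partial>N)"
    by simp
qed

lemma simple_proc_pair_integral:
  assumes P: "prob_space M" and filt: "is_filtration M F" and sp: "simple_partition F t k p \<xi>"
  shows "integrable (M \<Otimes>\<^sub>M lborel) (\<lambda>(\<omega>, s). indicator {0..t} s * simple_proc k p \<xi> s \<omega>)"
    "integral\<^sup>L (M \<Otimes>\<^sub>M lborel) (\<lambda>(\<omega>, s). indicator {0..t} s * simple_proc k p \<xi> s \<omega>) =
      (\<Sum>l<k. (p (Suc l) - p l) * (\<integral>\<omega>. \<xi> l \<omega> \<partial>M))"
proof -
  interpret prob_space M by fact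
  have step_int: "integrable M (\<xi> l)" "integrable lborel (indicat_real {p l<..p (Suc l)})"
    "p l \<le> p (Suc l)" "{p l<..p (Suc l)} \<subseteq> {0..t}" if l: "l < k" for l
  proof -
    obtain C where \<xi>: "\<xi> l \<in> borel_measurable (F (p l))" "\<And>\<omega>. \<bar>\<xi> l \<omega>\<bar> \<le> C"
      and "p l < p (Suc l)"
      using sp l unfolding simple_partition_def by blast
    then show "p l \<le> p (Suc l)" by simp
    show "integrable M (\<xi> l)"
      by (rule integrable_const_bound[of _ C]) (use \<xi> filtration_measurable[OF filt \<xi>(1)] in auto)
    show "integrable lborel (indicat_real {p l<..p (Suc l)})"
      using \<open>p l < p (Suc l)\<close> by (intro integrable_real_indicator) auto
    show "{p l<..p (Suc l)} \<subseteq> {0..t}"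
      using simple_partition_bounds[OF sp, of l] simple_partition_bounds[OF sp, of "Suc l"] l by auto
  qed
  have pointwise: "indicator {0..t} s * simple_proc k p \<xi> s \<omega> =
      (\<Sum>l<k. \<xi> l \<omega> * indicator {p l<..p (Suc l)} s)" for \<omega> s
    unfolding simple_proc_def sum_distrib_left
  proof (intro sum.cong refl)
    fix l assume "l \<in> {..<k}"
    then show "indicator {0..t} s * (indicator {p l<..p (Suc l)} s * \<xi> l \<omega>) =
        \<xi> l \<omega> * indicator {p l<..p (Suc l)} s"
      using step_int(4)[of l] by (auto simp: indicator_def)
  qed
  have steps: "(\<lambda>(\<omega>, s). indicator {0..t} s * simple_proc k p \<xi> s \<omega>) =
      (\<lambda>x. \<Sum>l<k. (\<lambda>(\<omega>, s). \<xi> l \<omega> * indicator {p l<..p (Suc l)} s) x)"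
    by (simp add: fun_eq_iff pointwise)
  note pair = integrable_pair_mult[OF sigma_finite_measure_axioms lborel.sigma_finite_measure_axioms]
  show "integrable (M \<Otimes>\<^sub>M lborel) (\<lambda>(\<omega>, s). indicator {0..t} s * simple_proc k p \<xi> s \<omega>)"
    unfolding steps by (intro Bochner_Integration.integrable_sum pair(1) step_int) auto
  show "integral\<^sup>L (M \<Otimes>\<^sub>M lborel) (\<lambda>(\<omega>, s). indicator {0..t} s * simple_proc k p \<xi> s \<omega>) =
      (\<Sum>l<k. (p (Suc l) - p l) * (\<integral>\<omega>. \<xi> l \<omega> \<partial>M))"
    unfolding steps
    by (subst Bochner_Integration.integral_sum)
      (auto intro!: sum.cong pair step_int simp: pair(2)[OF step_int(1,2)] mult.commute step_int(3))
qed

lemma borel_measurable_simple_int: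
  assumes filt: "is_filtration M F" and bm: "brownian_motion M F B"
    and sp: "simple_partition F t k p \<xi>"
  shows "simple_int (\<lambda>s \<omega>. B s \<omega> $ j) k p \<xi> \<in> borel_measurable M"
  unfolding simple_int_def
proof (rule borel_measurable_sum)
  fix l assume "l \<in> {..<k}"
  then have "\<xi> l \<in> borel_measurable (F (p l))" and [measurable]: "B (p l) \<in> borel_measurable M"
      "B (p (Suc l)) \<in> borel_measurable M"
    using sp simple_partition_bounds[OF sp, of l] simple_partition_bounds[OF sp, of "Suc l"]
      brownian_motion_measurable[OF filt bm] unfolding simple_partition_def by auto
  then have [measurable]: "\<xi> l \<in> borel_measurable M" using filtration_measurable[OF filt] by blast
  show "(\<lambda>\<omega>. \<xi> l \<omega> * (B (p (Suc l)) \<omega> $ j - B (p l) \<omega> $ j)) \<in> borel_measurable M"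
    by measurable
qed

text \<open>The \<open>L\<^sup>2(dP \<otimes> ds)\<close> convergence in the definition of the Ito integral, read on the
  product space \<open>M \<Otimes>\<^sub>M lborel\<close> with the weight \<open>z = 1\<^sub>[\<^sub>0\<^sub>,\<^sub>t\<^sub>]\<close>.\<close>
lemma simple_approximation_pair_limit:
  fixes H :: "real \<Rightarrow> 'a \<Rightarrow> real"
  assumes P: "prob_space M" and filt: "is_filtration M F" and t: "0 \<le> t"
    and prog: "progressive F H" and sp: "\<And>m. simple_partition F t (k m) (p m) (\<xi> m)"
    and conv: "(\<lambda>m. \<integral>\<^sup>+\<omega>. (\<integral>\<^sup>+s\<in>{0..t}. ennreal ((H s \<omega> - simple_proc (k m) (p m) (\<xi> m) s \<omega>)\<^sup>2)
      \<partial>lborel) \<partial>M) \<longlonglongrightarrow> 0"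
  shows "integrable (M \<Otimes>\<^sub>M lborel) (\<lambda>(\<omega>, s). indicator {0..t} s * H s \<omega>)"
    "(\<lambda>m. \<Sum>l<k m. (p m (Suc l) - p m l) * (\<integral>\<omega>. \<xi> m l \<omega> \<partial>M))
      \<longlonglongrightarrow> integral\<^sup>L (M \<Otimes>\<^sub>M lborel) (\<lambda>(\<omega>, s). indicator {0..t} s * H s \<omega>)"
proof -
  interpret prob_space M by fact
  define f where "f = (\<lambda>(\<omega>, s). indicator {0..t} s * H s \<omega> :: real)"
  define fm where "fm = (\<lambda>m (\<omega>, s). indicator {0..t} s * simple_proc (k m) (p m) (\<xi> m) s \<omega> :: real)"
  define z where "z = (\<lambda>x :: 'a \<times> real. indicator {0..t} (snd x) :: real)"
  note fm_pair = simple_proc_pair_integral[OF P filt sp]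
  have [measurable]: "f \<in> borel_measurable (M \<Otimes>\<^sub>M lborel)"
    unfolding f_def using progressive_pair_measurable[OF filt prog t] .
  have [measurable]: "fm m \<in> borel_measurable (M \<Otimes>\<^sub>M lborel)" for m
    unfolding fm_def using fm_pair(1) by (rule borel_measurable_integrable)
  have [measurable]: "z \<in> borel_measurable (M \<Otimes>\<^sub>M lborel)" unfolding z_def by measurable
  have weight: "f x * z x = f x" "fm m x * z x = fm m x" for m x
    by (auto simp: f_def fm_def z_def indicator_def split: prod.splits)
  have "integrable (M \<Otimes>\<^sub>M lborel) (\<lambda>(\<omega>, s). 1 * indicat_real {0..t} s)"
    using integrable_pair_mult(1)[OF sigma_finite_measure_axioms lborel.sigma_finite_measure_axioms,
        of "\<lambda>_. 1" "indicator {0..t}"] t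
    by (simp add: integrable_real_indicator)
  then have z_sq: "integrable (M \<Otimes>\<^sub>M lborel) (\<lambda>x. (z x)\<^sup>2)"
    by (rule Bochner_Integration.integrable_cong[THEN iffD1, rotated 2])
      (auto simp: z_def indicator_def)
  have "(\<integral>\<^sup>+x. ennreal ((f x - fm m x)\<^sup>2) \<partial>(M \<Otimes>\<^sub>M lborel)) =
      (\<integral>\<^sup>+\<omega>. (\<integral>\<^sup>+s. ennreal ((f (\<omega>, s) - fm m (\<omega>, s))\<^sup>2) \<partial>lborel) \<partial>M)" for m
    by (rule lborel.nn_integral_fst[symmetric]) measurable
  also have "\<dots> m = (\<integral>\<^sup>+\<omega>. (\<integral>\<^sup>+s\<in>{0..t}. ennreal ((H s \<omega> - simple_proc (k m) (p m) (\<xi> m) s \<omega>)\<^sup>2)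
      \<partial>lborel) \<partial>M)" for m
    by (auto intro!: nn_integral_cong simp: f_def fm_def indicator_def power2_eq_square)
  moreover have "integrable (M \<Otimes>\<^sub>M lborel) (fm m)" for m
    unfolding fm_def using fm_pair(1) .
  ultimately have L: "integrable (M \<Otimes>\<^sub>M lborel) f"
      "(\<lambda>m. integral\<^sup>L (M \<Otimes>\<^sub>M lborel) (fm m)) \<longlonglongrightarrow> integral\<^sup>L (M \<Otimes>\<^sub>M lborel) f"
    using L2_limit_integral_mult[where f=f and fm=fm and N="M \<Otimes>\<^sub>M lborel" and z=z] conv z_sq
    by (simp_all add: weight)
  show "integrable (M \<Otimes>\<^sub>M lborel) (\<lambda>(\<omega>, s). indicator {0..t} s * H s \<omega>)"
    using L(1) unfolding f_def .
  show "(\<lambda>m. \<Sum>l<k m. (p m (Suc l) - p m l) * (\<integral>\<omega>. \<xi> m l \<omega> \<partial>M))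
      \<longlonglongrightarrow> integral\<^sup>L (M \<Otimes>\<^sub>M lborel) (\<lambda>(\<omega>, s). indicator {0..t} s * H s \<omega>)"
    using L(2) unfolding fm_def f_def fm_pair(2) .
qed

lemma ito_integral_covariance:
  fixes B :: "real \<Rightarrow> 'a \<Rightarrow> real^'n" and H :: "real \<Rightarrow> 'a \<Rightarrow> real" and I :: "'a \<Rightarrow> real"
  assumes P: "prob_space M" and filt: "is_filtration M F" and bm: "brownian_motion M F B"
    and t: "0 \<le> t" and ito: "ito_integral_is M F (\<lambda>s \<omega>. B s \<omega> $ j) t H I"
  shows "integrable M (\<lambda>\<omega>. I \<omega> * B t \<omega> $ i)"
    "integrable M (\<lambda>\<omega>. \<integral>s. indicator {0..t} s * H s \<omega> \<partial>lborel)"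
    "AE \<omega> in M. integrable lborel (\<lambda>s. indicator {0..t} s * H s \<omega>)"
    "(\<integral>\<omega>. I \<omega> * B t \<omega> $ i \<partial>M) =
      (if i = j then (\<integral>\<omega>. (\<integral>s. indicator {0..t} s * H s \<omega> \<partial>lborel) \<partial>M) else 0)"
proof -
  interpret prob_space M by fact
  interpret pair_sigma_finite M "lborel :: real measure" by unfold_locales
  obtain k p \<xi> where sp: "\<And>m. simple_partition F t (k m) (p m) (\<xi> m)"
    and conv_H: "(\<lambda>m. \<integral>\<^sup>+\<omega>. (\<integral>\<^sup>+s\<in>{0..t}. ennreal ((H s \<omega> - simple_proc (k m) (p m) (\<xi> m) s \<omega>)\<^sup>2)
      \<partial>lborel) \<partial>M) \<longlonglongrightarrow> 0"
    and conv_I: "(\<lambda>m. \<integral>\<^sup>+\<omega>. ennreal ((I \<omega> - simple_int (\<lambda>s \<omega>. B s \<omega> $ j) (k m) (p m) (\<xi> m) \<omega>)\<^sup>2)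
      \<partial>M) \<longlonglongrightarrow> 0"
    and prog: "progressive F H" and I_meas: "I \<in> borel_measurable M"
    using ito unfolding ito_integral_is_def by blast
  note H_pair = simple_approximation_pair_limit[OF P filt t prog sp conv_H]
  note Fubini = AE_integrable_fst'[OF H_pair(1)] integrable_fst'[OF H_pair(1)]
    integral_fst'[OF H_pair(1)]
  then show "integrable M (\<lambda>\<omega>. \<integral>s. indicator {0..t} s * H s \<omega> \<partial>lborel)"
    "AE \<omega> in M. integrable lborel (\<lambda>s. indicator {0..t} s * H s \<omega>)"
    by simp_all
  note simple_cov = simple_int_covariance[OF P filt bm sp, where j=j and i=i]
  have Bt_sq: "integrable M (\<lambda>\<omega>. (B t \<omega> $ i)\<^sup>2)"
    using brownian_increment_moments(3)[OF bm order.refl t, of i i]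
    by (rule Bochner_Integration.integrable_cong[THEN iffD1, rotated 2])
      (auto simp: brownian_motion_start[OF bm] power2_eq_square)
  have "B t \<in> borel_measurable M" using brownian_motion_measurable[OF filt bm t] .
  moreover have "simple_int (\<lambda>s \<omega>. B s \<omega> $ j) (k m) (p m) (\<xi> m) \<in> borel_measurable M" for m
    using borel_measurable_simple_int[OF filt bm sp] .
  ultimately have L: "integrable M (\<lambda>\<omega>. I \<omega> * B t \<omega> $ i)"
    "(\<lambda>m. \<integral>\<omega>. simple_int (\<lambda>s \<omega>. B s \<omega> $ j) (k m) (p m) (\<xi> m) \<omega> * B t \<omega> $ i \<partial>M)
      \<longlonglongrightarrow> (\<integral>\<omega>. I \<omega> * B t \<omega> $ i \<partial>M)"
    using L2_limit_integral_mult[OF conv_I I_meas _ _ simple_cov(1) Bt_sq] by auto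
  then show "integrable M (\<lambda>\<omega>. I \<omega> * B t \<omega> $ i)" by simp
  show "(\<integral>\<omega>. I \<omega> * B t \<omega> $ i \<partial>M) =
      (if i = j then (\<integral>\<omega>. (\<integral>s. indicator {0..t} s * H s \<omega> \<partial>lborel) \<partial>M) else 0)"
  proof (cases "i = j")
    case True
    then have "(\<lambda>m. \<Sum>l<k m. (p m (Suc l) - p m l) * (\<integral>\<omega>. \<xi> m l \<omega> \<partial>M))
        \<longlonglongrightarrow> (\<integral>\<omega>. I \<omega> * B t \<omega> $ i \<partial>M)"
      using L(2) simple_cov(2) True by simp
    then show ?thesis
      using LIMSEQ_unique[OF _ H_pair(2)] Fubini(3) True by simp
  next
    case False
    then show ?thesis using L(2) by (simp add: simple_cov(2) LIMSEQ_const_iff)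
  qed
qed

section \<open>Gaussian width\<close>

definition support_function :: "(real^'n) set \<Rightarrow> real^'n \<Rightarrow> ereal" where
  "support_function K \<gamma> = (SUP x\<in>K. ereal (x \<bullet> \<gamma>))"

lemma GW_eq_support_function:
  "GW K = enn2ereal (\<integral>\<^sup>+\<gamma>. e2ennreal (support_function K \<gamma>) \<partial>std_gauss)
    - enn2ereal (\<integral>\<^sup>+\<gamma>. e2ennreal (- support_function K \<gamma>) \<partial>std_gauss)"
  unfolding GW_def support_function_def Let_def ..

lemma borel_measurable_support_function[measurable]:
  fixes K :: "(real^'n) set"
  shows "support_function K \<in> borel_measurable borel"
proof (rule borel_measurableI_greater)
  fix y :: ereal
  have "{\<gamma> \<in> space borel. y < support_function K \<gamma>} = (\<Union>x\<in>K. {\<gamma>. y < ereal (x \<bullet> \<gamma>)})"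
    by (auto simp: support_function_def less_SUP_iff)
  moreover have "open {\<gamma>::real^'n. y < ereal (x \<bullet> \<gamma>)}" for x
  proof (cases y)
    case (real r)
    then have "{\<gamma>::real^'n. y < ereal (x \<bullet> \<gamma>)} = {\<gamma>. r < x \<bullet> \<gamma>}" by auto
    then show ?thesis by (simp add: open_halfspace_gt)
  qed simp_all
  then have "open (\<Union>x\<in>K. {\<gamma>::real^'n. y < ereal (x \<bullet> \<gamma>)})" by (intro open_UN) auto
  ultimately show "{\<gamma> \<in> space borel. y < support_function K \<gamma>} \<in> sets borel" by simp
qed

lemma support_function_scale_le:
  assumes "0 \<le> c"
  shows "support_function K (c *\<^sub>R \<gamma>) \<le> ereal c * support_function K \<gamma>"
  unfolding support_function_def
proof (rule SUP_least)
  fix x assume "x \<in> K"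
  then have "ereal c * ereal (x \<bullet> \<gamma>) \<le> ereal c * (SUP x\<in>K. ereal (x \<bullet> \<gamma>))"
    using assms by (intro ereal_mult_left_mono) (auto intro: SUP_upper)
  then show "ereal (x \<bullet> (c *\<^sub>R \<gamma>)) \<le> ereal c * (SUP x\<in>K. ereal (x \<bullet> \<gamma>))" by simp
qed

lemma e2ennreal_cmult:
  assumes "0 \<le> c"
  shows "e2ennreal (ereal c * x) = ennreal c * e2ennreal x"
proof (cases x)
  case PInf
  then show ?thesis using assms by (cases "c = 0") (auto simp: ennreal_mult_top)
next
  case MInf
  then show ?thesis using assms by (cases "c = 0") (auto simp: e2ennreal_neg)
qed (use assms in \<open>simp add: ennreal_mult'\<close>)

lemma enn2ereal_eq_ereal_enn2real: "x < \<infinity> \<Longrightarrow> enn2ereal x = ereal (enn2real x)"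
  by (cases x rule: ennreal_cases) auto

lemma normal_density_scale:
  assumes "t > 0"
  shows "normal_density 0 (sqrt t) (sqrt t * z) = normal_density 0 1 z / sqrt t"
proof -
  have "sqrt (2 * pi * t) = sqrt (2 * pi) * sqrt t" by (simp add: real_sqrt_mult)
  moreover have "(sqrt t * z)\<^sup>2 / (2 * t) = z\<^sup>2 / 2" using assms by (simp add: power_mult_distrib)
  ultimately show ?thesis using assms unfolding normal_density_def by (simp add: field_simps)
qed

lemma gauss_pdf_scale:
  assumes "t > 0"
  shows "gauss_pdf t (sqrt t *\<^sub>R y) * sqrt t ^ CARD('n) = gauss_pdf 1 (y::real^'n)"
proof -
  have "gauss_pdf t (sqrt t *\<^sub>R y) = (\<Prod>i\<in>UNIV. normal_density 0 1 (y $ i) / sqrt t)"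
    unfolding gauss_pdf_def using normal_density_scale[OF assms] by simp
  also have "\<dots> = gauss_pdf 1 y / sqrt t ^ CARD('n)"
    unfolding gauss_pdf_def by (simp add: prod_dividef)
  finally show ?thesis using assms by simp
qed

lemma brownian_nn_integral_std_gauss:
  fixes B :: "real \<Rightarrow> 'a \<Rightarrow> real^'n" and \<phi> :: "real^'n \<Rightarrow> ennreal"
  assumes bm: "brownian_motion M F B" and t: "t > 0" and \<phi>: "\<phi> \<in> borel_measurable borel"
  shows "(\<integral>\<^sup>+\<omega>. \<phi> (B t \<omega>) \<partial>M) = (\<integral>\<^sup>+y. \<phi> (sqrt t *\<^sub>R y) \<partial>std_gauss)"
proof -
  have "\<forall>s u. 0 \<le> s \<and> s < u \<longrightarrow> distributed M lborel (\<lambda>\<omega>. B u \<omega> - B s \<omega>) (gauss_density (u - s))"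
    using bm unfolding brownian_motion_def by blast
  then have Bt: "distributed M lborel (\<lambda>\<omega>. B t \<omega> - B 0 \<omega>) (\<lambda>x. ennreal (gauss_pdf t x))"
    using t by (auto simp: gauss_density_eq_gauss_pdf dest: spec[of _ 0] spec[of _ t])
  have [measurable]: "\<phi> \<in> borel_measurable lborel" using \<phi> by simp
  have lborel_scale: "(lborel::(real^'n) measure) =
      density (distr lborel borel (\<lambda>x. 0 + sqrt t *\<^sub>R x)) (\<lambda>_. ennreal (\<bar>sqrt t\<bar> ^ DIM(real^'n)))"
    by (rule lborel_affine) (use t in simp)
  have density_scale: "ennreal (\<bar>sqrt t\<bar> ^ CARD('n)) * (ennreal (gauss_pdf t (sqrt t *\<^sub>R y)) * \<phi> (sqrt t *\<^sub>R y))
      = ennreal (gauss_pdf 1 y) * \<phi> (sqrt t *\<^sub>R y)" for y :: "real^'n"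
  proof -
    have "ennreal (\<bar>sqrt t\<bar> ^ CARD('n)) * ennreal (gauss_pdf t (sqrt t *\<^sub>R y)) =
        ennreal (gauss_pdf t (sqrt t *\<^sub>R y) * sqrt t ^ CARD('n))"
      using t gauss_pdf_nonneg by (simp add: ennreal_mult' ennreal_power mult.commute)
    then show ?thesis using gauss_pdf_scale[OF t, of y] by (simp add: mult.assoc[symmetric])
  qed
  have "(\<integral>\<^sup>+\<omega>. \<phi> (B t \<omega>) \<partial>M) = (\<integral>\<^sup>+\<omega>. \<phi> (B t \<omega> - B 0 \<omega>) \<partial>M)"
    by (rule nn_integral_cong) (simp add: brownian_motion_start[OF bm])
  also have "\<dots> = (\<integral>\<^sup>+x. ennreal (gauss_pdf t x) * \<phi> x \<partial>lborel)"
    by (rule distributed_nn_integral[OF Bt, symmetric]) simp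
  also have "\<dots> = (\<integral>\<^sup>+y. ennreal (gauss_pdf 1 y) * \<phi> (sqrt t *\<^sub>R y) \<partial>lborel)"
    by (subst lborel_scale) (simp add: nn_integral_density nn_integral_distr density_scale)
  also have "\<dots> = (\<integral>\<^sup>+y. \<phi> (sqrt t *\<^sub>R y) \<partial>std_gauss)"
    unfolding std_gauss_def gauss_density_eq_gauss_pdf by (subst nn_integral_density) auto
  finally show ?thesis .
qed

lemma brownian_support_function_parts:
  fixes B :: "real \<Rightarrow> 'a \<Rightarrow> real^'n" and V :: "'a \<Rightarrow> real"
  assumes bm: "brownian_motion M F B" and t: "t > 0"
    and le: "AE \<omega> in M. ereal (V \<omega>) \<le> support_function K (B t \<omega>)"
  shows "(\<integral>\<^sup>+\<omega>. ennreal (V \<omega>) \<partial>M) \<le> ennreal (sqrt t) * (\<integral>\<^sup>+\<gamma>. e2ennreal (support_function K \<gamma>) \<partial>std_gauss)"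
    "ennreal (sqrt t) * (\<integral>\<^sup>+\<gamma>. e2ennreal (- support_function K \<gamma>) \<partial>std_gauss) \<le> (\<integral>\<^sup>+\<omega>. ennreal (- V \<omega>) \<partial>M)"
proof -
  have sets_std_gauss: "sets std_gauss = sets (borel :: (real^'n) measure)"
    unfolding std_gauss_def by simp
  have pos_meas: "(\<lambda>\<gamma>. e2ennreal (support_function K \<gamma>)) \<in> borel_measurable std_gauss"
    unfolding measurable_cong_sets[OF sets_std_gauss refl] by measurable
  have neg_meas: "(\<lambda>\<gamma>. e2ennreal (- support_function K \<gamma>)) \<in> borel_measurable std_gauss"
    unfolding measurable_cong_sets[OF sets_std_gauss refl] by measurable
  have scale: "support_function K (sqrt t *\<^sub>R \<gamma>) \<le> ereal (sqrt t) * support_function K \<gamma>" for \<gamma>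
    using t by (intro support_function_scale_le) simp
  have "AE \<omega> in M. ennreal (V \<omega>) \<le> e2ennreal (support_function K (B t \<omega>))"
    using le by eventually_elim (metis e2ennreal_ereal e2ennreal_mono)
  then have "(\<integral>\<^sup>+\<omega>. ennreal (V \<omega>) \<partial>M) \<le> (\<integral>\<^sup>+\<omega>. e2ennreal (support_function K (B t \<omega>)) \<partial>M)"
    by (rule nn_integral_mono_AE)
  also have "\<dots> = (\<integral>\<^sup>+\<gamma>. e2ennreal (support_function K (sqrt t *\<^sub>R \<gamma>)) \<partial>std_gauss)"
    by (rule brownian_nn_integral_std_gauss[OF bm t]) measurable
  also have "\<dots> \<le> (\<integral>\<^sup>+\<gamma>. ennreal (sqrt t) * e2ennreal (support_function K \<gamma>) \<partial>std_gauss)"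
    using scale t by (intro nn_integral_mono) (auto simp: e2ennreal_cmult[symmetric] intro: e2ennreal_mono)
  also have "\<dots> = ennreal (sqrt t) * (\<integral>\<^sup>+\<gamma>. e2ennreal (support_function K \<gamma>) \<partial>std_gauss)"
    by (rule nn_integral_cmult[OF pos_meas])
  finally show "(\<integral>\<^sup>+\<omega>. ennreal (V \<omega>) \<partial>M) \<le>
      ennreal (sqrt t) * (\<integral>\<^sup>+\<gamma>. e2ennreal (support_function K \<gamma>) \<partial>std_gauss)" .
  have "ennreal (sqrt t) * (\<integral>\<^sup>+\<gamma>. e2ennreal (- support_function K \<gamma>) \<partial>std_gauss) =
      (\<integral>\<^sup>+\<gamma>. ennreal (sqrt t) * e2ennreal (- support_function K \<gamma>) \<partial>std_gauss)"
    by (rule nn_integral_cmult[OF neg_meas, symmetric])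
  also have "\<dots> \<le> (\<integral>\<^sup>+\<gamma>. e2ennreal (- support_function K (sqrt t *\<^sub>R \<gamma>)) \<partial>std_gauss)"
  proof (rule nn_integral_mono)
    fix \<gamma> :: "real^'n"
    have "ereal (sqrt t) * (- support_function K \<gamma>) \<le> - support_function K (sqrt t *\<^sub>R \<gamma>)"
      using scale[of \<gamma>] by (simp add: ereal_uminus_le_reorder)
    then show "ennreal (sqrt t) * e2ennreal (- support_function K \<gamma>) \<le>
        e2ennreal (- support_function K (sqrt t *\<^sub>R \<gamma>))"
      using t by (simp add: e2ennreal_cmult[symmetric] e2ennreal_mono)
  qed
  also have "\<dots> = (\<integral>\<^sup>+\<omega>. e2ennreal (- support_function K (B t \<omega>)) \<partial>M)"
    by (rule brownian_nn_integral_std_gauss[OF bm t, symmetric]) measurable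
  also have "\<dots> \<le> (\<integral>\<^sup>+\<omega>. ennreal (- V \<omega>) \<partial>M)"
  proof (rule nn_integral_mono_AE)
    show "AE \<omega> in M. e2ennreal (- support_function K (B t \<omega>)) \<le> ennreal (- V \<omega>)"
      using le
    proof eventually_elim
      case (elim \<omega>)
      then have "- support_function K (B t \<omega>) \<le> ereal (- V \<omega>)"
        by (simp add: ereal_uminus_le_reorder)
      then show ?case by (metis e2ennreal_ereal e2ennreal_mono)
    qed
  qed
  finally show "ennreal (sqrt t) * (\<integral>\<^sup>+\<gamma>. e2ennreal (- support_function K \<gamma>) \<partial>std_gauss) \<le>
      (\<integral>\<^sup>+\<omega>. ennreal (- V \<omega>) \<partial>M)" .
qed

lemma expectation_le_GW:
  fixes B :: "real \<Rightarrow> 'a \<Rightarrow> real^'n" and V :: "'a \<Rightarrow> real"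
  assumes bm: "brownian_motion M F B" and t: "t > 0" and V: "integrable M V"
    and le: "AE \<omega> in M. ereal (V \<omega>) \<le> support_function K (B t \<omega>)"
  shows "ereal (\<integral>\<omega>. V \<omega> \<partial>M) \<le> ereal (sqrt t) * GW K"
proof -
  define Pf where "Pf = (\<integral>\<^sup>+\<gamma>. e2ennreal (support_function K \<gamma>) \<partial>std_gauss)"
  define Nf where "Nf = (\<integral>\<^sup>+\<gamma>. e2ennreal (- support_function K \<gamma>) \<partial>std_gauss)"
  define PV where "PV = (\<integral>\<^sup>+\<omega>. ennreal (V \<omega>) \<partial>M)"
  define NV where "NV = (\<integral>\<^sup>+\<omega>. ennreal (- V \<omega>) \<partial>M)"
  note parts = brownian_support_function_parts[OF bm t le, folded Pf_def Nf_def PV_def NV_def]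
  have parts_le_norm: "PV \<le> (\<integral>\<^sup>+\<omega>. ennreal (norm (V \<omega>)) \<partial>M)" "NV \<le> (\<integral>\<^sup>+\<omega>. ennreal (norm (V \<omega>)) \<partial>M)"
    unfolding PV_def NV_def by (auto intro!: nn_integral_mono ennreal_leI)
  have "(\<integral>\<^sup>+\<omega>. ennreal (norm (V \<omega>)) \<partial>M) < \<infinity>"
    using V integrable_iff_bounded by blast
  then have PV_fin: "PV < \<infinity>" and NV_fin: "NV < \<infinity>"
    using le_less_trans[OF parts_le_norm(1)] le_less_trans[OF parts_le_norm(2)] by blast+
  have "Nf < \<infinity>"
  proof (rule ccontr)
    assume "\<not> Nf < \<infinity>"
    then have "Nf = \<infinity>" by (simp add: less_top[symmetric])
    then have "ennreal (sqrt t) * Nf = \<infinity>" using t by (simp add: ennreal_mult_top)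
    then have "NV = \<infinity>" using parts(2) by (simp add: top_unique)
    then show False using NV_fin by simp
  qed
  have V_int: "(\<integral>\<omega>. V \<omega> \<partial>M) = enn2real PV - enn2real NV"
    unfolding PV_def NV_def by (rule real_lebesgue_integral_def[OF V])
  have GW: "GW K = enn2ereal Pf - enn2ereal Nf"
    unfolding GW_eq_support_function Pf_def Nf_def ..
  have Nf_real: "enn2ereal Nf = ereal (enn2real Nf)"
    using \<open>Nf < \<infinity>\<close> by (rule enn2ereal_eq_ereal_enn2real)
  show ?thesis
  proof (cases "Pf < \<infinity>")
    case False
    then have "Pf = \<infinity>" by (simp add: less_top[symmetric])
    then show ?thesis using t unfolding GW Nf_real by simp
  next
    case True
    have "GW K = ereal (enn2real Pf - enn2real Nf)"
      unfolding GW Nf_real enn2ereal_eq_ereal_enn2real[OF True] by simp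
    moreover have "enn2real PV \<le> sqrt t * enn2real Pf"
      using enn2real_mono[OF parts(1)] True t by (simp add: enn2real_mult ennreal_mult_less_top)
    moreover have "sqrt t * enn2real Nf \<le> enn2real NV"
      using enn2real_mono[OF parts(2)] NV_fin t by (simp add: enn2real_mult)
    ultimately show ?thesis unfolding V_int by (simp add: right_diff_distrib)
  qed
qed

section \<open>Expected trace integral and Markov's inequality\<close>

lemma AE_AE_nonneg_pair_lborel:
  fixes f :: "'a \<times> real \<Rightarrow> real"
  assumes "sigma_finite_measure M" and f: "f \<in> borel_measurable (M \<Otimes>\<^sub>M lborel)"
    and nonneg: "\<And>s. AE \<omega> in M. 0 \<le> f (\<omega>, s)"
  shows "AE \<omega> in M. AE s in lborel. 0 \<le> f (\<omega>, s)"
proof -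
  interpret pair_sigma_finite M "lborel :: real measure"
    by (simp add: pair_sigma_finite_def assms lborel.sigma_finite_measure_axioms)
  have "{x \<in> space (M \<Otimes>\<^sub>M lborel). 0 \<le> f (fst x, snd x)} \<in> sets (M \<Otimes>\<^sub>M lborel)"
    using f by measurable
  moreover have "AE s in lborel. AE \<omega> in M. 0 \<le> f (\<omega>, s)" using nonneg by simp
  ultimately show ?thesis by (subst AE_commute) auto
qed

lemma brownian_uncorrelated_initial:
  fixes B :: "real \<Rightarrow> 'a \<Rightarrow> real^'n" and X :: "'a \<Rightarrow> real"
  assumes P: "prob_space M" and filt: "is_filtration M F" and bm: "brownian_motion M F B"
    and t: "0 \<le> t" and X: "X \<in> borel_measurable (F 0)" "integrable M X"
  shows "integrable M (\<lambda>\<omega>. X \<omega> * B t \<omega> $ i)" "(\<integral>\<omega>. X \<omega> * B t \<omega> $ i \<partial>M) = 0"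
proof -
  have start: "X \<omega> * B t \<omega> $ i = X \<omega> * (B t \<omega> - B 0 \<omega>) $ i" if "\<omega> \<in> space M" for \<omega>
    using brownian_motion_start[OF bm that] by simp
  note indep = brownian_increment_integral_mult[OF P filt bm order.refl t X, of "\<lambda>v. v $ i"]
  show "integrable M (\<lambda>\<omega>. X \<omega> * B t \<omega> $ i)"
    using indep brownian_increment_moments(1)[OF bm order.refl t, of i]
    by (subst Bochner_Integration.integrable_cong[OF refl start]) auto
  show "(\<integral>\<omega>. X \<omega> * B t \<omega> $ i \<partial>M) = 0"
    using indep brownian_increment_moments(1,2)[OF bm order.refl t, of i]
    by (subst Bochner_Integration.integral_cong[OF refl start]) auto
qed

lemma integrable_mult_trace:
  fixes A :: "'b \<Rightarrow> real^'n^'n" and c :: "'b \<Rightarrow> real"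
  assumes "\<And>i. integrable N (\<lambda>s. c s * A s $ i $ i)"
  shows "integrable N (\<lambda>s. c s * trace (A s))"
    "(\<integral>s. c s * trace (A s) \<partial>N) = (\<Sum>i\<in>UNIV. \<integral>s. c s * A s $ i $ i \<partial>N)"
  using assms unfolding trace_def sum_distrib_left by auto

lemma ito_sde_trace_measurable:
  assumes filt: "is_filtration M F" and sde: "ito_sde M F g \<Gamma> B" and t: "0 \<le> t"
  shows "(\<lambda>(\<omega>, s). indicator {0..t} s * trace (\<Gamma> s \<omega>)) \<in> borel_measurable (M \<Otimes>\<^sub>M lborel)"
proof -
  have "progressive F (\<lambda>s \<omega>. \<Gamma> s \<omega> $ i $ i)" for i
    using sde t unfolding ito_sde_def ito_integral_is_def by blast
  then have "(\<lambda>x. \<Sum>i\<in>UNIV. (\<lambda>(\<omega>, s). indicator {0..t} s * \<Gamma> s \<omega> $ i $ i) x) \<in> borel_measurable (M \<Otimes>\<^sub>M lborel)"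
    using progressive_pair_measurable[OF filt _ t] by (intro borel_measurable_sum) auto
  then show ?thesis by (simp add: trace_def sum_distrib_left case_prod_beta)
qed

lemma ito_sde_integrals:
  assumes "ito_sde M F g \<Gamma> B" and "0 \<le> t"
  obtains I :: "'n::finite \<Rightarrow> 'n \<Rightarrow> 'a \<Rightarrow> real" where
    "\<And>i j. ito_integral_is M F (\<lambda>s \<omega>. B s \<omega> $ j) t (\<lambda>s \<omega>. \<Gamma> s \<omega> $ i $ j) (I i j)"
    "\<And>i. AE \<omega> in M. g t \<omega> $ i - g 0 \<omega> $ i = (\<Sum>j\<in>UNIV. I i j \<omega>)"
proof -
  have "\<forall>i. \<exists>I :: 'n \<Rightarrow> 'a \<Rightarrow> real.
      (\<forall>j. ito_integral_is M F (\<lambda>s \<omega>. B s \<omega> $ j) t (\<lambda>s \<omega>. \<Gamma> s \<omega> $ i $ j) (I j)) \<and>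
      (AE \<omega> in M. g t \<omega> $ i - g 0 \<omega> $ i = (\<Sum>j\<in>UNIV. I j \<omega>))"
    using assms unfolding ito_sde_def by blast
  then have "\<exists>I. \<forall>i. (\<forall>j. ito_integral_is M F (\<lambda>s \<omega>. B s \<omega> $ j) t (\<lambda>s \<omega>. \<Gamma> s \<omega> $ i $ j) (I i j)) \<and>
      (AE \<omega> in M. g t \<omega> $ i - g 0 \<omega> $ i = (\<Sum>j\<in>UNIV. I i j \<omega>))"
    by (rule choice)
  then show ?thesis using that by blast
qed

lemma inner_eq_of_increments:
  fixes x y b :: "real^'n" and z :: "'n \<Rightarrow> 'n \<Rightarrow> real"
  assumes "\<And>i. x $ i - y $ i = (\<Sum>j\<in>UNIV. z i j)"
  shows "x \<bullet> b = (\<Sum>i\<in>UNIV. y $ i * b $ i) + (\<Sum>i\<in>UNIV. \<Sum>j\<in>UNIV. z i j * b $ i)"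
proof -
  have "x $ i = y $ i + (\<Sum>j\<in>UNIV. z i j)" for i using assms[of i] by (simp add: algebra_simps)
  then show ?thesis unfolding inner_vec_def by (simp add: sum_distrib_right distrib_right sum.distrib)
qed

text \<open>Ito's isometry in covariance form: only the diagonal entries of \<open>\<Gamma>\<close> correlate with
  \<open>B\<^sub>t\<close>, and \<open>g\<^sub>0\<close> does not correlate at all.\<close>
lemma ito_sde_inner_expectation:
  fixes B g :: "real \<Rightarrow> 'a \<Rightarrow> real^'n" and \<Gamma> :: "real \<Rightarrow> 'a \<Rightarrow> real^'n^'n"
  assumes P: "prob_space M" and filt: "is_filtration M F" and bm: "brownian_motion M F B"
    and mart: "vec_martingale M F g" and sde: "ito_sde M F g \<Gamma> B" and t: "0 \<le> t"
  shows "AE \<omega> in M. integrable lborel (\<lambda>s. indicator {0..t} s * \<Gamma> s \<omega> $ i $ i)"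
    "integrable M (\<lambda>\<omega>. \<integral>s. indicator {0..t} s * \<Gamma> s \<omega> $ i $ i \<partial>lborel)"
    "integrable M (\<lambda>\<omega>. g t \<omega> \<bullet> B t \<omega>)"
    "(\<integral>\<omega>. g t \<omega> \<bullet> B t \<omega> \<partial>M) =
      (\<Sum>i\<in>UNIV. \<integral>\<omega>. (\<integral>s. indicator {0..t} s * \<Gamma> s \<omega> $ i $ i \<partial>lborel) \<partial>M)"
proof -
  obtain I :: "'n \<Rightarrow> 'n \<Rightarrow> 'a \<Rightarrow> real" where
    ito: "\<And>i j. ito_integral_is M F (\<lambda>s \<omega>. B s \<omega> $ j) t (\<lambda>s \<omega>. \<Gamma> s \<omega> $ i $ j) (I i j)"
    and increment: "\<And>i. AE \<omega> in M. g t \<omega> $ i - g 0 \<omega> $ i = (\<Sum>j\<in>UNIV. I i j \<omega>)"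
    using ito_sde_integrals[OF sde t] by blast
  define D where "D = (\<lambda>i \<omega>. \<integral>s. indicator {0..t} s * \<Gamma> s \<omega> $ i $ i \<partial>lborel)"
  note cov = ito_integral_covariance[OF P filt bm t ito]
  show "AE \<omega> in M. integrable lborel (\<lambda>s. indicator {0..t} s * \<Gamma> s \<omega> $ i $ i)"
    "integrable M (\<lambda>\<omega>. \<integral>s. indicator {0..t} s * \<Gamma> s \<omega> $ i $ i \<partial>lborel)"
    using cov(2,3) by blast+
  have g0: "integrable M (\<lambda>\<omega>. g 0 \<omega> $ i * B t \<omega> $ i)" "(\<integral>\<omega>. g 0 \<omega> $ i * B t \<omega> $ i \<partial>M) = 0" for i
    using brownian_uncorrelated_initial[OF P filt bm t, of "\<lambda>\<omega>. g 0 \<omega> $ i"] mart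
    unfolding vec_martingale_def by auto
  have row_entry: "(\<integral>\<omega>. I i j \<omega> * B t \<omega> $ i \<partial>M) = (if j = i then (\<integral>\<omega>. D i \<omega> \<partial>M) else 0)" for i j
  proof (cases "j = i")
    case True
    then show ?thesis using cov(4) by (simp add: D_def)
  next
    case False
    then show ?thesis using cov(4) by simp
  qed
  define W where "W = (\<lambda>\<omega>. (\<Sum>i\<in>UNIV. g 0 \<omega> $ i * B t \<omega> $ i) + (\<Sum>i\<in>UNIV. \<Sum>j\<in>UNIV. I i j \<omega> * B t \<omega> $ i))"
  have W_int: "integrable M W" unfolding W_def using g0 cov(1) by auto
  have "AE \<omega> in M. \<forall>i\<in>UNIV. g t \<omega> $ i - g 0 \<omega> $ i = (\<Sum>j\<in>UNIV. I i j \<omega>)"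
    by (rule AE_finite_allI) (use increment in auto)
  then have inner_W: "AE \<omega> in M. g t \<omega> \<bullet> B t \<omega> = W \<omega>"
    unfolding W_def by eventually_elim (simp add: inner_eq_of_increments)
  have [measurable]: "g t \<in> borel_measurable M" "B t \<in> borel_measurable M"
    using mart brownian_motion_measurable[OF filt bm t] filtration_measurable[OF filt] t
    unfolding vec_martingale_def by blast+
  have V_meas: "(\<lambda>\<omega>. g t \<omega> \<bullet> B t \<omega>) \<in> borel_measurable M" by measurable
  show "integrable M (\<lambda>\<omega>. g t \<omega> \<bullet> B t \<omega>)"
    using integrable_cong_AE[OF V_meas _ inner_W] W_int by simp
  have "(\<integral>\<omega>. g t \<omega> \<bullet> B t \<omega> \<partial>M) = (\<integral>\<omega>. W \<omega> \<partial>M)"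
    using W_int by (intro integral_cong_AE[OF V_meas _ inner_W]) simp
  also have "\<dots> = (\<Sum>i\<in>UNIV. \<integral>\<omega>. D i \<omega> \<partial>M)"
    unfolding W_def using g0 cov(1) by (simp add: row_entry)
  finally show "(\<integral>\<omega>. g t \<omega> \<bullet> B t \<omega> \<partial>M) =
      (\<Sum>i\<in>UNIV. \<integral>\<omega>. (\<integral>s. indicator {0..t} s * \<Gamma> s \<omega> $ i $ i \<partial>lborel) \<partial>M)"
    unfolding D_def .
qed

lemma ito_sde_trace_expectation:
  fixes B g :: "real \<Rightarrow> 'a \<Rightarrow> real^'n" and \<Gamma> :: "real \<Rightarrow> 'a \<Rightarrow> real^'n^'n"
  assumes P: "prob_space M" and filt: "is_filtration M F" and bm: "brownian_motion M F B"
    and mart: "vec_martingale M F g" and sde: "ito_sde M F g \<Gamma> B" and t: "0 \<le> t"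
  shows "AE \<omega> in M. integrable lborel (\<lambda>s. indicator {0..t} s * trace (\<Gamma> s \<omega>))"
    "integrable M (\<lambda>\<omega>. \<integral>s. indicator {0..t} s * trace (\<Gamma> s \<omega>) \<partial>lborel)"
    "(\<integral>\<omega>. g t \<omega> \<bullet> B t \<omega> \<partial>M) = (\<integral>\<omega>. (\<integral>s. indicator {0..t} s * trace (\<Gamma> s \<omega>) \<partial>lborel) \<partial>M)"
proof -
  interpret prob_space M by fact
  note diag = ito_sde_inner_expectation[OF P filt bm mart sde t]
  define D where "D = (\<lambda>i \<omega>. \<integral>s. indicator {0..t} s * \<Gamma> s \<omega> $ i $ i \<partial>lborel)"
  have AE_diag: "AE \<omega> in M. \<forall>i\<in>UNIV. integrable lborel (\<lambda>s. indicator {0..t} s * \<Gamma> s \<omega> $ i $ i)"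
    using diag(1) by (intro AE_finite_allI) auto
  then show "AE \<omega> in M. integrable lborel (\<lambda>s. indicator {0..t} s * trace (\<Gamma> s \<omega>))"
    by eventually_elim (simp add: integrable_mult_trace)
  have T_eq: "AE \<omega> in M. (\<Sum>i\<in>UNIV. D i \<omega>) = (\<integral>s. indicator {0..t} s * trace (\<Gamma> s \<omega>) \<partial>lborel)"
    using AE_diag by eventually_elim (simp add: integrable_mult_trace D_def)
  have D_sum_int: "integrable M (\<lambda>\<omega>. \<Sum>i\<in>UNIV. D i \<omega>)" using diag(2) by (simp add: D_def)
  have T_meas: "(\<lambda>\<omega>. \<integral>s. indicator {0..t} s * trace (\<Gamma> s \<omega>) \<partial>lborel) \<in> borel_measurable M"
    using ito_sde_trace_measurable[OF filt sde t] by (intro lborel.borel_measurable_lebesgue_integral) simp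
  show "integrable M (\<lambda>\<omega>. \<integral>s. indicator {0..t} s * trace (\<Gamma> s \<omega>) \<partial>lborel)"
    using integrable_cong_AE[OF _ T_meas T_eq] D_sum_int by simp
  have "(\<Sum>i\<in>UNIV. \<integral>\<omega>. D i \<omega> \<partial>M) = (\<integral>\<omega>. (\<Sum>i\<in>UNIV. D i \<omega>) \<partial>M)"
    using diag(2) by (simp add: D_def Bochner_Integration.integral_sum)
  also have "\<dots> = (\<integral>\<omega>. (\<integral>s. indicator {0..t} s * trace (\<Gamma> s \<omega>) \<partial>lborel) \<partial>M)"
    using D_sum_int by (intro integral_cong_AE[OF _ T_meas T_eq]) simp
  finally show "(\<integral>\<omega>. g t \<omega> \<bullet> B t \<omega> \<partial>M) = (\<integral>\<omega>. (\<integral>s. indicator {0..t} s * trace (\<Gamma> s \<omega>) \<partial>lborel) \<partial>M)"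
    using diag(4) by (simp add: D_def)
qed

lemma mult_measure_gt_less_integral:
  fixes Y :: "'a \<Rightarrow> real"
  assumes Y: "integrable M Y" and nonneg: "AE \<omega> in M. 0 \<le> Y \<omega>"
    and pos: "measure M {\<omega>\<in>space M. a < Y \<omega>} \<noteq> 0"
  shows "a * measure M {\<omega>\<in>space M. a < Y \<omega>} < (\<integral>\<omega>. Y \<omega> \<partial>M)"
proof -
  define A where "A = {\<omega>\<in>space M. a < Y \<omega>}"
  have [measurable]: "Y \<in> borel_measurable M" using Y by simp
  have A: "A \<in> sets M" unfolding A_def by measurable
  have A_fin: "emeasure M A < \<infinity>"
    using pos unfolding A_def[symmetric] by (simp add: measure_def enn2real_eq_0_iff less_top)
  define excess where "excess = (\<lambda>\<omega>. (Y \<omega> - a) * indicator A \<omega>)"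
  have ind: "integrable M (\<lambda>\<omega>. a * indicator A \<omega> :: real)"
    using A A_fin by (intro integrable_mult_right integrable_real_indicator) auto
  have "integrable M (\<lambda>\<omega>. Y \<omega> * indicator A \<omega> - a * indicator A \<omega>)"
    using integrable_real_mult_indicator[OF A Y] ind by simp
  then have excess_int: "integrable M excess"
    unfolding excess_def by (simp add: left_diff_distrib)
  have excess_nonneg: "AE \<omega> in M. 0 \<le> excess \<omega>" by (auto simp: excess_def A_def indicator_def)
  have "(\<integral>\<omega>. excess \<omega> \<partial>M) \<noteq> 0"
  proof
    assume "(\<integral>\<omega>. excess \<omega> \<partial>M) = 0"
    then have "AE \<omega> in M. excess \<omega> = 0"
      using integral_nonneg_eq_0_iff_AE[OF excess_int excess_nonneg] by simp
    then have "AE \<omega> in M. \<omega> \<notin> A" by eventually_elim (auto simp: excess_def A_def)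
    then have "emeasure M A = 0" using AE_iff_measurable[OF A] by (auto simp: A_def)
    then show False using pos unfolding A_def[symmetric] by (simp add: measure_def)
  qed
  then have excess_pos: "0 < (\<integral>\<omega>. excess \<omega> \<partial>M)" using integral_nonneg_AE[OF excess_nonneg] by simp
  have "(\<integral>\<omega>. excess \<omega> \<partial>M) + a * measure M A = (\<integral>\<omega>. excess \<omega> + a * indicator A \<omega> \<partial>M)"
    using excess_int ind A by simp
  also have "\<dots> \<le> (\<integral>\<omega>. Y \<omega> \<partial>M)"
    using excess_int ind Y nonneg
    by (intro integral_mono_AE) (auto elim!: eventually_mono simp: excess_def indicator_def)
  finally show ?thesis using excess_pos unfolding A_def by linarith
qed

lemma markov_inequality_strict:
  fixes Y :: "'a \<Rightarrow> real"
  assumes "prob_space M" and Y: "integrable M Y" and nonneg: "AE \<omega> in M. 0 \<le> Y \<omega>"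
    and \<alpha>: "\<alpha> > 1" and mean: "(\<integral>\<omega>. Y \<omega> \<partial>M) \<le> a / \<alpha>"
  shows "measure M {\<omega>\<in>space M. a < Y \<omega>} < 1 / \<alpha>"
proof (cases "measure M {\<omega>\<in>space M. a < Y \<omega>} = 0")
  case False
  then have "a * measure M {\<omega>\<in>space M. a < Y \<omega>} < a / \<alpha>"
    using mult_measure_gt_less_integral[OF Y nonneg] mean by fastforce
  moreover have "0 \<le> a / \<alpha>" using integral_nonneg_AE[OF nonneg] mean by linarith
  then have "0 \<le> a" using \<alpha> by (simp add: zero_le_divide_iff)
  ultimately have "0 < a" by (cases "a = 0") auto
  with \<open>a * measure M {\<omega>\<in>space M. a < Y \<omega>} < a / \<alpha>\<close> show ?thesis
    using \<alpha> by (simp add: field_simps)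
qed (use \<alpha> in simp)

lemma time_integral_gt_of_INF_gt:
  fixes f :: "real \<Rightarrow> real"
  assumes t: "t > 0" and f: "integrable lborel (\<lambda>s. indicator {0..t} s * f s)"
    and INF_gt: "ereal b < (INF s\<in>{0..t}. ereal (f s))"
  shows "b * t < (\<integral>s. indicator {0..t} s * f s \<partial>lborel)"
proof -
  have "(INF s\<in>{0..t}. ereal (f s)) \<le> ereal (f 0)" using t by (intro INF_lower) simp
  with INF_gt obtain r where r: "(INF s\<in>{0..t}. ereal (f s)) = ereal r"
    by (cases "INF s\<in>{0..t}. ereal (f s)") auto
  have "b < r" using INF_gt r by simp
  have r_le: "r \<le> f s" if "s \<in> {0..t}" for s
    using INF_lower[OF that, of "\<lambda>s. ereal (f s)"] r by simp
  have const: "integrable lborel (\<lambda>s. indicator {0..t} s * r)"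
    using t by (intro integrable_mult_left integrable_real_indicator) auto
  have "b * t < r * t" using \<open>b < r\<close> t by simp
  also have "\<dots> = (\<integral>s. indicator {0..t} s * r \<partial>lborel)" using t by (simp add: mult.commute)
  also have "\<dots> \<le> (\<integral>s. indicator {0..t} s * f s \<partial>lborel)"
    by (rule integral_mono[OF const f]) (auto simp: indicator_def r_le)
  finally show ?thesis .
qed

lemma measure_INF_gt_le_time_integral_gt:
  fixes f :: "real \<Rightarrow> 'a \<Rightarrow> real"
  assumes "prob_space M" and t: "t > 0"
    and f: "AE \<omega> in M. integrable lborel (\<lambda>s. indicator {0..t} s * f s \<omega>)"
    and [measurable]: "(\<lambda>\<omega>. \<integral>s. indicator {0..t} s * f s \<omega> \<partial>lborel) \<in> borel_measurable M"
  shows "measure M {\<omega>\<in>space M. ereal b < (INF s\<in>{0..t}. ereal (f s \<omega>))}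
    \<le> measure M {\<omega>\<in>space M. b * t < (\<integral>s. indicator {0..t} s * f s \<omega> \<partial>lborel)}"
proof -
  interpret prob_space M by fact
  have "emeasure M {\<omega>\<in>space M. ereal b < (INF s\<in>{0..t}. ereal (f s \<omega>))}
    \<le> emeasure M {\<omega>\<in>space M. b * t < (\<integral>s. indicator {0..t} s * f s \<omega> \<partial>lborel)}"
    using f by (intro emeasure_mono_AE) (auto elim!: eventually_mono intro: time_integral_gt_of_INF_gt[OF t])
  then show ?thesis by (simp add: emeasure_eq_measure)
qed

lemma ito_sde_time_integral_le_GW:
  fixes B g :: "real \<Rightarrow> 'a \<Rightarrow> real^'n" and \<Gamma> :: "real \<Rightarrow> 'a \<Rightarrow> real^'n^'n"
  assumes P: "prob_space M" and filt: "is_filtration M F" and bm: "brownian_motion M F B"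
    and mart: "vec_martingale M F g" and sde: "ito_sde M F g \<Gamma> B"
    and trace_nonneg: "\<forall>s\<ge>0. AE \<omega> in M. trace (\<Gamma> s \<omega>) \<ge> 0"
    and in_K: "\<forall>s\<ge>0. AE \<omega> in M. g s \<omega> \<in> K" and t: "t > 0"
  shows "AE \<omega> in M. 0 \<le> (\<integral>s. indicator {0..t} s * trace (\<Gamma> s \<omega>) \<partial>lborel)"
    "ereal (\<integral>\<omega>. (\<integral>s. indicator {0..t} s * trace (\<Gamma> s \<omega>) \<partial>lborel) \<partial>M) \<le> ereal (sqrt t) * GW K"
proof -
  have t0: "0 \<le> t" using t by simp
  note E = ito_sde_trace_expectation[OF P filt bm mart sde t0]
  have "AE \<omega> in M. AE s in lborel. 0 \<le> indicator {0..t} s * trace (\<Gamma> s \<omega>)"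
    using AE_AE_nonneg_pair_lborel[OF prob_space_imp_sigma_finite[OF P]
        ito_sde_trace_measurable[OF filt sde t0]] trace_nonneg
    by (auto simp: indicator_def)
  with E(1) show "AE \<omega> in M. 0 \<le> (\<integral>s. indicator {0..t} s * trace (\<Gamma> s \<omega>) \<partial>lborel)"
    by eventually_elim (auto intro: integral_nonneg_AE)
  have "AE \<omega> in M. ereal (g t \<omega> \<bullet> B t \<omega>) \<le> support_function K (B t \<omega>)"
    using in_K t0 by (auto elim!: eventually_mono simp: support_function_def intro: SUP_upper2)
  then show "ereal (\<integral>\<omega>. (\<integral>s. indicator {0..t} s * trace (\<Gamma> s \<omega>) \<partial>lborel) \<partial>M) \<le> ereal (sqrt t) * GW K"
    using expectation_le_GW[OF bm t ito_sde_inner_expectation(3)[OF P filt bm mart sde t0]] E(3)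
    by simp
qed

theorem lemma3p19:
  fixes M :: "'a measure" and F :: "real \<Rightarrow> 'a measure"
    and B g :: "real \<Rightarrow> 'a \<Rightarrow> real^'n" and \<Gamma> :: "real \<Rightarrow> 'a \<Rightarrow> real^'n^'n"
    and K :: "(real^'n) set" and t \<alpha> :: real
  assumes "prob_space M"
    and "is_filtration M F"
    and "brownian_motion M F B"
    and "vec_martingale M F g"
    and "ito_sde M F g \<Gamma> B"
    and "\<forall>s\<ge>0. AE \<omega> in M. trace (\<Gamma> s \<omega>) \<ge> 0"
    and "\<forall>s\<ge>0. AE \<omega> in M. g s \<omega> \<in> K"
    and "t > 0" and "\<alpha> > 1"
  shows "measure M {\<omega>\<in>space M. (INF s\<in>{0..t}. ereal (trace (\<Gamma> s \<omega>))) > ereal (\<alpha> / sqrt t) * GW K}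
           < 1 / \<alpha>"
proof -
  note P = assms(1) and t = assms(8) and \<alpha> = assms(9)
  define T where "T = (\<lambda>\<omega>. \<integral>s. indicator {0..t} s * trace (\<Gamma> s \<omega>) \<partial>lborel)"
  have t0: "0 \<le> t" using t by simp
  note E = ito_sde_trace_expectation[OF assms(1-5) t0, folded T_def]
  note T_bounds = ito_sde_time_integral_le_GW[OF assms(1-8), folded T_def]
  show ?thesis
  proof (cases "GW K")
    case (real c)
    define b where "b = \<alpha> / sqrt t * c"
    have "measure M {\<omega>\<in>space M. (INF s\<in>{0..t}. ereal (trace (\<Gamma> s \<omega>))) > ereal (\<alpha> / sqrt t) * GW K}
        \<le> measure M {\<omega>\<in>space M. b * t < T \<omega>}"
      using measure_INF_gt_le_time_integral_gt[OF P t, of "\<lambda>s \<omega>. trace (\<Gamma> s \<omega>)" b] E(1,2) t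
      unfolding T_def real b_def by simp
    also have "\<dots> < 1 / \<alpha>"
    proof (rule markov_inequality_strict[OF P E(2) _ \<alpha>])
      show "AE \<omega> in M. 0 \<le> T \<omega>" using T_bounds(1) unfolding T_def .
      have "b * t / \<alpha> = c * (t / sqrt t)" unfolding b_def using \<alpha> by simp
      also have "\<dots> = sqrt t * c" using t by (simp add: real_div_sqrt)
      finally show "(\<integral>\<omega>. T \<omega> \<partial>M) \<le> b * t / \<alpha>" using T_bounds(2) unfolding real by simp
    qed
    finally show ?thesis .
  qed (use T_bounds t \<alpha> in auto)
qed

end
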